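(* Assume (HN.1), (HN.2), (HO), (HI). Then for $i,j\in\{0,1\}$, almost surely, $$\lim_{n\to\infty}\frac1{\pi^n}\sum_{k\in\mathbb T_n^i\setminus\mathbb T_0}\varepsilon_k^2\delta_{2k+j}=\sigma^2p_{ij}\frac{\pi}{\pi-1}Wz^i,\qquad \lim_{n\to\infty}\frac1{\pi^n}\sum_{k\in\mathbb T_n\setminus\mathbb T_0}\delta_{2k}\delta_{2k+1}\varepsilon_{2k}\varepsilon_{2k+1}=\rho\,\bar p(1,1)\frac{\pi}{\pi-1}W,$$ where $\bar p(1,1)=p^{(0)}(1,1)z^0+p^{(1)}(1,1)z^1$.
   Context: Tree notation: individuals labelled by $\mathbb{T}=\mathbb{N}^*$, $k$ has daughters $2k$ (type 0) and $2k+1$ (type 1); $\mathbb{G}_n=\{2^n,\dots,2^{n+1}-1\}$, $\mathbb{T}_n=\bigcup_{\ell=0}^n\mathbb{G}_\ell$, $\mathbb{T}^0=\mathbb{T}\cap 2\mathbb{N}$, $\mathbb{T}^1=\mathbb{T}\cap(2\mathbb{N}+1)$, $\mathbb T_n^i=\mathbb T_n\cap\mathbb T^i$. BAR process: $\mathbb E[X_1^8]<\infty$ and for $k\ge1$, $X_{2k}=a+bX_k+\varepsilon_{2k}$, $X_{2k+1}=c+dX_k+\varepsilon_{2k+1}$, $(a,b,c,d)\in\mathbb R^4$, $0<\max(|b|,|d|)<1$; $\mathcal F_n=\sigma(X_k,k\in\mathbb T_n)$. (HN.1): for all $n\ge0$, $k\in\mathbb G_{n+1}$, $\varepsilon_k\in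 L^8$ and a.s. $\mathbb E[\varepsilon_k|\mathcal F_n]=0$, $\mathbb E[\varepsilon_k^2|\mathcal F_n]=\sigma^2$, $\mathbb E[\varepsilon_k^4|\mathcal F_n]=\tau^4$, $\mathbb E[\varepsilon_k^8|\mathcal F_n]=\kappa^8$ with $\sigma^2,\tau^4,\kappa^8\in(0,\infty)$; and for $k\in\mathbb G_n$, $\mathbb E[\varepsilon_{2k}\varepsilon_{2k+1}|\mathcal F_n]=\rho=\rho'\sigma^2$, $\mathbb E[\varepsilon_{2k}^2\varepsilon_{2k+1}^2|\mathcal F_n]=\nu^2\tau^4$, $\mathbb E[\varepsilon_{2k}^4\varepsilon_{2k+1}^4|\mathcal F_n]=\lambda^4\kappa^8$ with $|\rho'|,\nu^2,\lambda^4\in[0,1)$. (HN.2): for each $n\ge0$ the vectors $(\varepsilon_{2k},\varepsilon_{2k+1})$, $k\in\mathbb G_n$, are conditionally independent given $\mathcal F_n$. Observation process: $\delta_1=1$, $\delta_{2k}=\delta_k\zeta_k^0$, $\delta_{2k+1}=\delta_k\zeta_k^1$, with $\boldsymbol\zeta_k=(\zeta_k^0,\zeta_k^1)\in\{0,1\}^2$ independent, common law $p^{(0)}(j_0,j_1)=\mathbb P(\boldsymbol\zeta_k=(j_0,j_1))$ for even $k$ and $p^{(1)}$ for odd $k$; $p_{i0}=p^{(i)}(1,0)+p^{(i)}(1,1)$, $p_{i1}=p^{(i)}(0,1)+p^{(i)}(1,1)$, $\boldsymbol P=(p_{ij})$. (HO): all $p_{ij}>0$ and the Perron eigenvalue $\pi$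 of $\boldsymbol P$ satisfies $\pi>1$; $\boldsymbol z=(z^0,z^1)$ is the positive left eigenvector for $\pi$ with $z^0+z^1=1$. (HI): $(\delta_k)$, $(\boldsymbol\zeta_k)$ are independent of $(X_k)$, $(\varepsilon_k)$. With $Z_n^i=|\{k\in\mathbb G_n\cap\mathbb T^i:\delta_k=1\}|$, $W$ denotes the nonnegative random variable with $(Z_n^0,Z_n^1)/\pi^n\to W\boldsymbol z$ a.s. *)

theory Defs
  imports "HOL-Probability.Probability"
begin

text \<open>Tree notation: individuals are labelled by positive naturals.\<close>

definition genG :: "nat \<Rightarrow> nat set" where
  "genG n = {2^n..<2^(Suc n)}"

definition treeT :: "nat \<Rightarrow> nat set" where
  "treeT n = {1..<2^(Suc n)}"

definition natF :: "'a measure \<Rightarrow> (nat \<Rightarrow> 'a \<Rightarrow> real) \<Rightarrow> nat \<Rightarrow> 'a measure" where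
  "natF M X n = sigma (space M) {X k -` A \<inter> space M | k A. k \<in> treeT n \<and> A \<in> sets borel}"

definition cond_indep_given ::
  "'a measure \<Rightarrow> 'a measure \<Rightarrow> ('i \<Rightarrow> 'a \<Rightarrow> 'b::topological_space) \<Rightarrow> 'i set \<Rightarrow> bool" where
  "cond_indep_given M F Y I \<longleftrightarrow>
     (\<forall>J B. J \<subseteq> I \<longrightarrow> finite J \<longrightarrow> (\<forall>j\<in>J. B j \<in> sets borel) \<longrightarrow>
        (AE \<omega> in M. real_cond_exp M F (\<lambda>x. \<Prod>j\<in>J. indicator (B j) (Y j x)) \<omega>
                    = (\<Prod>j\<in>J. real_cond_exp M F (\<lambda>x. indicator (B j) (Y j x)) \<omega>)))"

definition Pmat :: "(nat \<Rightarrow> nat \<Rightarrow> nat \<Rightarrow> real) \<Rightarrow> nat \<Rightarrow> nat \<Rightarrow> real" where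
  "Pmat p i j = (if j = 0 then p i 1 0 + p i 1 1 else p i 0 1 + p i 1 1)"

end

theory Submission
  imports Defs
begin

text \<open>Each generation-wise sum splits into a fluctuation and a predictable part. Given the past,
  the centred noise terms \<open>\<epsilon>\<^sub>k\<^sup>2 - \<sigma>\<^sup>2\<close> (resp. \<open>\<epsilon>\<^sub>2\<^sub>k \<epsilon>\<^sub>2\<^sub>k\<^sub>+\<^sub>1 - \<rho>\<close>) of distinct mothers are
  uncorrelated by (HN.2), and the observation indicators factor out of the second moments by
  (HI); the centred observation variables \<open>\<delta>\<^sub>k (\<zeta>\<^sub>k\<^sup>j - p\<^sub>i\<^sub>j)\<close> are uncorrelated by the
  independence of the \<open>\<zeta>\<^sub>k\<close>. Hence each fluctuation of generation \<open>l\<close> has second moment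
  \<open>O(\<pi>\<^sup>l)\<close>, since \<open>\<pi>\<^sup>l\<close> bounds the expected number of observed individuals (through a positive
  right eigenvector of \<open>P\<close>); divided by \<open>\<pi>\<^sup>l\<close>, the fluctuations have summable second moments and
  vanish almost surely. The predictable part is \<open>\<sigma>\<^sup>2 p\<^sub>i\<^sub>j Z\<^sub>l\<^sup>i\<close> (resp. \<open>\<rho> \<Sum>\<^sub>i p\<^sup>i(1,1) Z\<^sub>l\<^sup>i\<close>),
  and \<open>Z\<^sub>l\<^sup>i / \<pi>\<^sup>l \<longrightarrow> W z\<^sup>i\<close>. Summing over the generations \<open>1, \<dots>, n\<close> with the weights \<open>\<pi>\<^sup>l\<close>
  (a Toeplitz lemma) produces the factor \<open>\<pi> / (\<pi> - 1)\<close>.\<close>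

section \<open>Indexing of the binary tree\<close>

lemma genG_finite [simp]: "finite (genG n)"
  unfolding genG_def by simp

lemma genG_0: "genG 0 = {1}"
  unfolding genG_def by auto

lemma genG_ge1: "k \<in> genG n \<Longrightarrow> 1 \<le> k"
  unfolding genG_def by (auto simp: Suc_le_eq intro: order.strict_trans2[of 0 "2^n"])

lemma genG_Suc_ge2: "k \<in> genG (Suc n) \<Longrightarrow> 2 \<le> k"
  unfolding genG_def by (auto intro: order.trans[rotated] simp: Suc_le_eq)

lemma daughter_in_genG: "q \<in> genG n \<Longrightarrow> j < 2 \<Longrightarrow> 2*q+j \<in> genG (Suc n)"
  unfolding genG_def by auto

lemma genG_Suc_type_eq_image:
  assumes j: "j < 2"
  shows "{k \<in> genG (Suc n). k mod 2 = j} = (\<lambda>q. 2*q+j) ` genG n"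
proof (intro equalityI subsetI)
  fix k assume "k \<in> {k \<in> genG (Suc n). k mod 2 = j}"
  then have k: "2^Suc n \<le> k" "k < 2^Suc (Suc n)" "k mod 2 = j" unfolding genG_def by auto
  have "k = 2*(k div 2) + j" using k(3) by (metis mult.commute div_mult_mod_eq)
  moreover have "k div 2 \<in> genG n" using k(1,2) unfolding genG_def by auto
  ultimately show "k \<in> (\<lambda>q. 2*q+j) ` genG n" by blast
qed (use j in \<open>auto simp: genG_def\<close>)

lemma sum_genG_Suc_type:
  assumes "j < 2"
  shows "(\<Sum>k\<in>{k \<in> genG (Suc n). k mod 2 = j}. f k) = (\<Sum>q\<in>genG n. f (2*q+j))"
  unfolding genG_Suc_type_eq_image[OF assms] by (subst sum.reindex) (auto simp: inj_on_def)

lemma sum_split_parity: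
  fixes G :: "nat set"
  assumes "finite G"
  shows "sum f G = sum f {q\<in>G. q mod 2 = 0} + sum f {q\<in>G. q mod 2 = 1}"
proof -
  have "G = {q\<in>G. q mod 2 = 0} \<union> {q\<in>G. q mod 2 = 1}" by auto
  also have "sum f \<dots> = sum f {q\<in>G. q mod 2 = 0} + sum f {q\<in>G. q mod 2 = 1}"
    using assms by (intro sum.union_disjoint) auto
  finally show ?thesis .
qed

lemma treeT_0: "treeT 0 = {1}"
  unfolding treeT_def by auto

lemma treeT_Suc: "treeT (Suc n) = treeT n \<union> genG (Suc n)"
  unfolding treeT_def genG_def by auto

lemma sum_treeT_minus_root:
  "(\<Sum>k\<in>{k \<in> treeT n. P k} - treeT 0. F k) = (\<Sum>l\<in>{1..n}. \<Sum>k\<in>{k\<in>genG l. P k}. F k)"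
proof (induction n)
  case 0
  have "{k \<in> treeT 0. P k} - treeT 0 = {}" by auto
  then show ?case by (simp only: sum.empty) simp
next
  case (Suc n)
  have "(1::nat) \<le> 2 ^ n" by simp
  then have "\<not> 2 * 2 ^ n \<le> Suc 0" by linarith
  then have split: "{k \<in> treeT (Suc n). P k} - treeT 0
      = ({k \<in> treeT n. P k} - treeT 0) \<union> {k\<in>genG (Suc n). P k}"
    unfolding treeT_Suc treeT_0 genG_def by auto
  have "({k \<in> treeT n. P k} - treeT 0) \<inter> {k\<in>genG (Suc n). P k} = {}"
    unfolding treeT_def genG_def by auto
  moreover have "finite ({k \<in> treeT n. P k} - treeT 0)" "finite {k\<in>genG (Suc n). P k}"
    unfolding treeT_def by auto
  ultimately show ?case
    unfolding split by (simp add: sum.union_disjoint Suc)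
qed

section \<open>A Toeplitz lemma for geometric weights\<close>

lemma LIMSEQ_zero_of_contraction:
  fixes t u :: "nat \<Rightarrow> real"
  assumes c: "0 \<le> c" "c < 1"
    and contraction: "\<And>n. \<bar>t (Suc n)\<bar> \<le> c * \<bar>t n\<bar> + \<bar>u n\<bar>"
    and u: "u \<longlonglongrightarrow> 0"
  shows "t \<longlonglongrightarrow> 0"
proof (rule LIMSEQ_I)
  fix r :: real assume r: "r > 0"
  define e where "e = (1 - c) * (r/2)"
  have "e > 0" unfolding e_def using c r by simp
  then obtain N where N: "\<And>n. n \<ge> N \<Longrightarrow> norm (u n) < e" using LIMSEQ_D[OF u] by auto
  have bound: "\<bar>t (N + m)\<bar> \<le> r/2 + c^m * \<bar>t N\<bar>" for m
  proof (induction m)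
    case (Suc m)
    have "\<bar>t (N + Suc m)\<bar> \<le> c * \<bar>t (N + m)\<bar> + \<bar>u (N + m)\<bar>" using contraction[of "N+m"] by simp
    also have "\<dots> \<le> c * (r/2 + c^m * \<bar>t N\<bar>) + e"
      using Suc c N[of "N+m"] by (intro add_mono mult_left_mono) auto
    also have "\<dots> = r/2 + c^Suc m * \<bar>t N\<bar>" unfolding e_def by (simp add: field_simps)
    finally show ?case .
  qed (use r in simp)
  have "(\<lambda>m. c^m * \<bar>t N\<bar>) \<longlonglongrightarrow> 0"
    using c by (intro tendsto_mult_left_zero LIMSEQ_power_zero) auto
  then obtain K where K: "\<And>m. m \<ge> K \<Longrightarrow> c^m * \<bar>t N\<bar> < r/2"
    using LIMSEQ_D[of _ 0 "r/2"] r by force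
  show "\<exists>n0. \<forall>n\<ge>n0. norm (t n - 0) < r"
  proof (intro exI allI impI)
    fix n assume n: "n \<ge> N + K"
    then have "\<bar>t (N + (n - N))\<bar> < r" using bound[of "n - N"] K[of "n - N"] by linarith
    then show "norm (t n - 0) < r" using n by simp
  qed
qed

lemma LIMSEQ_partial_sums_div_power:
  fixes x :: "nat \<Rightarrow> real"
  assumes q: "q > 1" and x: "(\<lambda>l. x l / q^l) \<longlonglongrightarrow> L"
  shows "(\<lambda>n. (\<Sum>l\<in>{1..n}. x l) / q^n) \<longlonglongrightarrow> L * (q / (q - 1))"
proof -
  define t where "t n = (\<Sum>l\<in>{1..n}. x l) / q^n - L * (q / (q - 1))" for n
  define u where "u n = x (Suc n) / q^(Suc n) - L" for n
  have recursion: "t (Suc n) = t n / q + u n" for n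
    unfolding t_def u_def using q by (simp add: field_simps)
  have "(\<lambda>n. x (Suc n) / q^(Suc n) - L) \<longlonglongrightarrow> L - L"
    by (intro tendsto_diff LIMSEQ_Suc[OF x] tendsto_const)
  then have u: "u \<longlonglongrightarrow> 0" unfolding u_def by simp
  have "t \<longlonglongrightarrow> 0"
  proof (rule LIMSEQ_zero_of_contraction)
    show "0 \<le> 1/q" "1/q < 1" using q by auto
    show "\<bar>t (Suc n)\<bar> \<le> 1/q * \<bar>t n\<bar> + \<bar>u n\<bar>" for n
      unfolding recursion using q by (simp add: abs_triangle_ineq[THEN order_trans] abs_divide)
  qed (rule u)
  then have "(\<lambda>n. t n + L * (q / (q - 1))) \<longlonglongrightarrow> 0 + L * (q / (q - 1))"
    by (intro tendsto_add tendsto_const)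
  then show ?thesis unfolding t_def by simp
qed

section \<open>Second moments, independence and conditional independence\<close>

lemma integrable_mult_of_square_integrable:
  fixes f g :: "'a \<Rightarrow> real"
  assumes "f \<in> borel_measurable M" "g \<in> borel_measurable M"
    and "integrable M (\<lambda>x. (f x)\<^sup>2)" "integrable M (\<lambda>x. (g x)\<^sup>2)"
  shows "integrable M (\<lambda>x. f x * g x)"
proof (rule Bochner_Integration.integrable_bound[OF Bochner_Integration.integrable_add[OF assms(3,4)]])
  show "(\<lambda>x. f x * g x) \<in> borel_measurable M" using assms(1,2) by simp
  have "\<bar>f x\<bar> * \<bar>g x\<bar> \<le> (f x)\<^sup>2 + (g x)\<^sup>2" for x
  proof -
    have "2 * \<bar>f x\<bar> * \<bar>g x\<bar> \<le> (f x)\<^sup>2 + (g x)\<^sup>2"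
      using sum_squares_bound[of "\<bar>f x\<bar>" "\<bar>g x\<bar>"] by (simp add: power2_abs)
    moreover have "0 \<le> \<bar>f x\<bar> * \<bar>g x\<bar>" by simp
    ultimately show ?thesis by linarith
  qed
  then show "AE x in M. norm (f x * g x) \<le> norm ((f x)\<^sup>2 + (g x)\<^sup>2)"
    by (simp add: abs_mult)
qed

lemma integrable_mult_dominated:
  fixes f h k :: "'a \<Rightarrow> real"
  assumes "h \<in> borel_measurable M" "\<And>x. \<bar>h x\<bar> \<le> \<bar>f x\<bar>" "k \<in> borel_measurable M"
    and "integrable M (\<lambda>x. f x * k x)"
  shows "integrable M (\<lambda>x. h x * k x)"
proof (rule Bochner_Integration.integrable_bound[OF assms(4)])
  show "(\<lambda>x. h x * k x) \<in> borel_measurable M" using assms(1,3) by (rule borel_measurable_times)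
  show "AE x in M. norm (h x * k x) \<le> norm (f x * k x)"
    by (rule AE_I2) (simp add: abs_mult mult_right_mono assms(2))
qed

lemma square_product_minus_le:
  fixes x y r :: real
  shows "(x * y - r)\<^sup>2 \<le> x^4 + y^4 + 2 * r\<^sup>2"
proof -
  have "(x*y - r)\<^sup>2 \<le> 2*(x*y)\<^sup>2 + 2*r\<^sup>2"
    using zero_le_power2[of "x*y + r"] by (simp add: power2_eq_square algebra_simps)
  moreover have "2*(x*y)\<^sup>2 \<le> x^4 + y^4"
    using zero_le_power2[of "x\<^sup>2 - y\<^sup>2"] by (simp add: power2_eq_square power4_eq_xxxx algebra_simps)
  ultimately show ?thesis by simp
qed

lemma integral_square_sum_orthogonal:
  fixes A :: "'i \<Rightarrow> 'a \<Rightarrow> real"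
  assumes S: "finite S"
    and integrable: "\<And>k m. k \<in> S \<Longrightarrow> m \<in> S \<Longrightarrow> integrable M (\<lambda>x. A k x * A m x)"
    and orthogonal: "\<And>k m. k \<in> S \<Longrightarrow> m \<in> S \<Longrightarrow> k \<noteq> m \<Longrightarrow> (\<integral>x. A k x * A m x \<partial>M) = 0"
  shows "integrable M (\<lambda>x. (\<Sum>k\<in>S. A k x)\<^sup>2)"
    and "(\<integral>x. (\<Sum>k\<in>S. A k x)\<^sup>2 \<partial>M) = (\<Sum>k\<in>S. \<integral>x. (A k x)\<^sup>2 \<partial>M)"
proof -
  have square: "(\<Sum>k\<in>S. A k x)\<^sup>2 = (\<Sum>k\<in>S. \<Sum>m\<in>S. A k x * A m x)" for x
    by (simp add: power2_eq_square sum_product)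
  show "integrable M (\<lambda>x. (\<Sum>k\<in>S. A k x)\<^sup>2)"
    unfolding square using integrable by simp
  have "(\<integral>x. (\<Sum>k\<in>S. A k x)\<^sup>2 \<partial>M) = (\<Sum>k\<in>S. \<Sum>m\<in>S. \<integral>x. A k x * A m x \<partial>M)"
    unfolding square using integrable by (simp add: Bochner_Integration.integral_sum)
  also have "\<dots> = (\<Sum>k\<in>S. \<integral>x. A k x * A k x \<partial>M)"
  proof (rule sum.cong[OF refl])
    fix k assume k: "k \<in> S"
    have "(\<Sum>m\<in>S - {k}. \<integral>x. A k x * A m x \<partial>M) = 0"
      using orthogonal k by (intro sum.neutral) auto
    then show "(\<Sum>m\<in>S. \<integral>x. A k x * A m x \<partial>M) = (\<integral>x. A k x * A k x \<partial>M)"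
      using S k by (simp add: sum.remove)
  qed
  finally show "(\<integral>x. (\<Sum>k\<in>S. A k x)\<^sup>2 \<partial>M) = (\<Sum>k\<in>S. \<integral>x. (A k x)\<^sup>2 \<partial>M)"
    by (simp add: power2_eq_square)
qed

lemma (in finite_measure) integrable_indicator_comp:
  assumes "Z \<in> M \<rightarrow>\<^sub>M N" "B \<in> sets N"
  shows "integrable M (\<lambda>x. indicator B (Z x) :: real)"
  by (rule integrable_const_bound[where B=1]) (use assms in \<open>auto simp: indicator_def\<close>)

lemma (in prob_space) indep_set_integral_mult:
  fixes U V :: "'a \<Rightarrow> real"
  assumes indep: "indep_set A B"
    and N1: "space N1 = space M" "sets N1 \<subseteq> A" and N2: "space N2 = space M" "sets N2 \<subseteq> B"
    and U: "U \<in> borel_measurable N1" "integrable M U"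
    and V: "V \<in> borel_measurable N2" "integrable M V"
  shows "(\<integral>x. U x * V x \<partial>M) = integral\<^sup>L M U * integral\<^sup>L M V"
proof -
  have generated: "sigma_sets (space M) {W -` S \<inter> space M |S. S \<in> sets borel} \<subseteq> C"
    if "space N = space M" "sets N \<subseteq> C" "W \<in> borel_measurable N" for N C and W :: "'a \<Rightarrow> real"
  proof -
    have "{W -` S \<inter> space M |S. S \<in> sets borel} \<subseteq> sets N"
      using measurable_sets[OF that(3)] that(1) by auto
    from sets.sigma_sets_subset[OF this] show ?thesis using that(1,2) by simp
  qed
  have "indep_var borel U borel V"
    unfolding indep_var_def indep_vars_def
  proof (intro conjI ballI)
    show "case_bool U V i \<in> M \<rightarrow>\<^sub>M case_bool borel borel i" for i
      using U V by (cases i) (simp_all add: borel_measurable_integrable)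
    show "indep_sets (\<lambda>i. sigma_sets (space M)
        {case_bool U V i -` S \<inter> space M |S. S \<in> sets (case_bool borel borel i)}) UNIV"
      using indep unfolding indep_set_def
      by (rule indep_sets_mono_sets) (use generated N1 N2 U V in \<open>auto split: bool.split\<close>)
  qed
  then show ?thesis using indep_var_lebesgue_integral U V by blast
qed

text \<open>Both densities define the same image measure under \<open>Y\<close>.\<close>

lemma integral_density_pullback_eq:
  fixes Y :: "'a \<Rightarrow> 'b" and r1 r2 :: "'a \<Rightarrow> real" and g :: "'b \<Rightarrow> real"
  assumes Y: "Y \<in> M \<rightarrow>\<^sub>M N"
    and r1: "r1 \<in> borel_measurable M" "AE x in M. 0 \<le> r1 x" "integrable M r1"
    and r2: "r2 \<in> borel_measurable M" "AE x in M. 0 \<le> r2 x" "integrable M r2"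
    and events: "\<And>B. B \<in> sets N \<Longrightarrow>
        (\<integral>x. r1 x * indicator B (Y x) \<partial>M) = (\<integral>x. r2 x * indicator B (Y x) \<partial>M)"
    and g: "g \<in> borel_measurable N"
  shows "(\<integral>x. r1 x * g (Y x) \<partial>M) = (\<integral>x. r2 x * g (Y x) \<partial>M)"
proof -
  define \<mu> where "\<mu> r = distr (density M (\<lambda>x. ennreal (r x))) N Y" for r
  have emeasure_\<mu>: "emeasure (\<mu> r) B = ennreal (\<integral>x. r x * indicator B (Y x) \<partial>M)"
    if r: "r \<in> borel_measurable M" "AE x in M. 0 \<le> r x" "integrable M r" and B: "B \<in> sets N"
    for r B
  proof -
    have YB: "Y -` B \<inter> space M \<in> sets M" using measurable_sets[OF Y B] .
    have "emeasure (\<mu> r) B = (\<integral>\<^sup>+ x. ennreal (r x) * indicator (Y -` B \<inter> space M) x \<partial>M)"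
      unfolding \<mu>_def using Y B YB r by (simp add: emeasure_distr emeasure_density)
    also have "\<dots> = (\<integral>\<^sup>+ x. ennreal (r x * indicator B (Y x)) \<partial>M)"
      by (rule nn_integral_cong) (auto simp: indicator_def)
    also have "\<dots> = ennreal (\<integral>x. r x * indicator B (Y x) \<partial>M)"
    proof (rule nn_integral_eq_integral)
      show "integrable M (\<lambda>x. r x * indicator B (Y x))"
        using r(1) measurable_compose[OF Y borel_measurable_indicator[OF B]]
        by (intro Bochner_Integration.integrable_bound[OF r(3)] borel_measurable_times)
          (auto simp: indicator_def)
      show "AE x in M. 0 \<le> r x * indicator B (Y x)"
        using r(2) by eventually_elim simp
    qed
    finally show ?thesis .
  qed
  have "\<mu> r1 = \<mu> r2"
  proof (rule measure_eqI)
    show "sets (\<mu> r1) = sets (\<mu> r2)" unfolding \<mu>_def by simp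
    fix B assume "B \<in> sets (\<mu> r1)"
    then have "B \<in> sets N" unfolding \<mu>_def by simp
    then show "emeasure (\<mu> r1) B = emeasure (\<mu> r2) B"
      using emeasure_\<mu>[OF r1] emeasure_\<mu>[OF r2] events by simp
  qed
  moreover have "integral\<^sup>L (\<mu> r) g = (\<integral>x. r x * g (Y x) \<partial>M)"
    if "r \<in> borel_measurable M" "AE x in M. 0 \<le> r x" for r
    unfolding \<mu>_def using that Y g
    by (simp add: integral_distr integral_density measurable_compose[OF Y g])
  ultimately show ?thesis using r1 r2 by metis
qed

context prob_space
begin

lemma real_cond_exp_indicator_bounds:
  assumes F: "sigma_finite_subalgebra M F" and Z: "Z \<in> M \<rightarrow>\<^sub>M N" and B: "B \<in> sets N"
  shows "AE x in M. 0 \<le> real_cond_exp M F (\<lambda>x. indicator B (Z x)) x"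
    and "AE x in M. real_cond_exp M F (\<lambda>x. indicator B (Z x)) x \<le> 1"
proof -
  interpret F: sigma_finite_subalgebra M F by (rule F)
  have "integrable M (\<lambda>x. indicator B (Z x) :: real)" by (rule integrable_indicator_comp[OF Z B])
  then show "AE x in M. 0 \<le> real_cond_exp M F (\<lambda>x. indicator B (Z x)) x"
    and "AE x in M. real_cond_exp M F (\<lambda>x. indicator B (Z x)) x \<le> 1"
    by (rule F.real_cond_exp_ge_c, simp, rule F.real_cond_exp_le_c, simp add: indicator_def)
qed

lemma integrable_real_cond_exp_indicator_mult:
  fixes h :: "'a \<Rightarrow> real"
  assumes F: "sigma_finite_subalgebra M F" and Z: "Z \<in> M \<rightarrow>\<^sub>M N" and B: "B \<in> sets N"
    and h: "integrable M h"
  shows "integrable M (\<lambda>x. real_cond_exp M F (\<lambda>x. indicator B (Z x)) x * h x)"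
proof (rule Bochner_Integration.integrable_bound[OF h])
  show "(\<lambda>x. real_cond_exp M F (\<lambda>x. indicator B (Z x)) x * h x) \<in> borel_measurable M"
    using borel_measurable_integrable[OF h] by simp
  show "AE x in M. norm (real_cond_exp M F (\<lambda>x. indicator B (Z x)) x * h x) \<le> norm (h x)"
    using real_cond_exp_indicator_bounds[OF F Z B]
    by eventually_elim (auto simp: abs_mult intro: mult_left_le_one_le)
qed

lemma integral_indicator_mult_eq_real_cond_exp:
  fixes Y Y' :: "'a \<Rightarrow> 'b"
  assumes F: "sigma_finite_subalgebra M F"
    and Y: "Y \<in> M \<rightarrow>\<^sub>M N" "Y' \<in> M \<rightarrow>\<^sub>M N" and B: "B \<in> sets N" "B' \<in> sets N"
    and cond_indep: "AE x in M. real_cond_exp M F (\<lambda>x. indicator B (Y x) * indicator B' (Y' x)) x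
          = real_cond_exp M F (\<lambda>x. indicator B (Y x)) x * real_cond_exp M F (\<lambda>x. indicator B' (Y' x)) x"
  shows "(\<integral>x. indicator B' (Y' x) * indicator B (Y x) \<partial>M)
      = (\<integral>x. real_cond_exp M F (\<lambda>x. indicator B' (Y' x)) x * indicator B (Y x) \<partial>M)"
proof -
  interpret F: sigma_finite_subalgebra M F by (rule F)
  let ?V = "real_cond_exp M F (\<lambda>x. indicator B' (Y' x))"
  have "integrable M (\<lambda>x. indicator B (Y x) * indicator B' (Y' x) :: real)"
    using measurable_compose[OF Y(1) borel_measurable_indicator[OF B(1)]]
      measurable_compose[OF Y(2) borel_measurable_indicator[OF B(2)]]
    by (intro integrable_const_bound[where B=1] borel_measurable_times) (auto simp: indicator_def)
  then have "(\<integral>x. indicator B' (Y' x) * indicator B (Y x) \<partial>M)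
      = (\<integral>x. real_cond_exp M F (\<lambda>x. indicator B (Y x) * indicator B' (Y' x)) x \<partial>M)"
    using F.real_cond_exp_int(2) by (simp add: mult.commute)
  also have "\<dots> = (\<integral>x. ?V x * real_cond_exp M F (\<lambda>x. indicator B (Y x)) x \<partial>M)"
    using cond_indep by (intro integral_cong_AE) (auto simp: mult.commute)
  also have "\<dots> = (\<integral>x. ?V x * indicator B (Y x) \<partial>M)"
    using measurable_compose[OF Y(1) borel_measurable_indicator[OF B(1)]]
    by (intro F.real_cond_exp_intg(2) integrable_real_cond_exp_indicator_mult[OF F Y(2) B(2)]
        integrable_indicator_comp[OF Y(1) B(1)]) simp
  finally show ?thesis .
qed

text \<open>The conditional probability \<open>V\<close> of \<open>Y' \<in> B'\<close> and the indicator of \<open>Y' \<in> B'\<close> are densities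
  with the same integrals over the events generated by \<open>Y\<close>, so they integrate \<open>f \<circ> Y\<close> alike.\<close>

lemma integral_mult_indicator_eq_zero_of_cond_indep:
  fixes Y Y' :: "'a \<Rightarrow> 'b" and f :: "'b \<Rightarrow> real"
  assumes F: "sigma_finite_subalgebra M F"
    and Y: "Y \<in> M \<rightarrow>\<^sub>M N" "Y' \<in> M \<rightarrow>\<^sub>M N"
    and cond_indep: "\<And>B B'. B \<in> sets N \<Longrightarrow> B' \<in> sets N \<Longrightarrow>
        AE x in M. real_cond_exp M F (\<lambda>x. indicator B (Y x) * indicator B' (Y' x)) x
          = real_cond_exp M F (\<lambda>x. indicator B (Y x)) x * real_cond_exp M F (\<lambda>x. indicator B' (Y' x)) x"
    and f: "f \<in> borel_measurable N" "integrable M (\<lambda>x. f (Y x))"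
      "AE x in M. real_cond_exp M F (\<lambda>x. f (Y x)) x = 0"
    and B': "B' \<in> sets N"
  shows "(\<integral>x. f (Y x) * indicator B' (Y' x) \<partial>M) = 0"
proof -
  interpret F: sigma_finite_subalgebra M F by (rule F)
  define V where "V = real_cond_exp M F (\<lambda>x. indicator B' (Y' x))"
  have ind_B': "integrable M (\<lambda>x. indicator B' (Y' x) :: real)"
    by (rule integrable_indicator_comp[OF Y(2) B'])
  have "(\<integral>x. indicator B' (Y' x) * f (Y x) \<partial>M) = (\<integral>x. V x * f (Y x) \<partial>M)"
  proof (rule integral_density_pullback_eq[OF Y(1) _ _ ind_B' _ _ _ _ f(1)])
    show "(\<lambda>x. indicator B' (Y' x) :: real) \<in> borel_measurable M"
      by (rule measurable_compose[OF Y(2) borel_measurable_indicator[OF B']])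
    show "V \<in> borel_measurable M" unfolding V_def by simp
    show "AE x in M. 0 \<le> V x" unfolding V_def by (rule real_cond_exp_indicator_bounds(1)[OF F Y(2) B'])
    show "integrable M V" unfolding V_def by (rule F.real_cond_exp_int(1)[OF ind_B'])
    show "(\<integral>x. indicator B' (Y' x) * indicator B (Y x) \<partial>M) = (\<integral>x. V x * indicator B (Y x) \<partial>M)"
      if "B \<in> sets N" for B
      unfolding V_def by (rule integral_indicator_mult_eq_real_cond_exp[OF F Y that B' cond_indep[OF that B']])
  qed simp
  also have "\<dots> = (\<integral>x. V x * real_cond_exp M F (\<lambda>x. f (Y x)) x \<partial>M)"
    unfolding V_def using measurable_compose[OF Y(1) f(1)]
    by (intro F.real_cond_exp_intg(2)[symmetric] integrable_real_cond_exp_indicator_mult[OF F Y(2) B' f(2)])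
      simp
  also have "\<dots> = (\<integral>x. 0 \<partial>M)"
    unfolding V_def by (rule integral_cong_AE) (use f(3) in auto)
  finally show ?thesis by (simp add: mult.commute)
qed

text \<open>By the indicator case, the positive and negative parts of \<open>f \<circ> Y\<close> are densities with equal
  integrals over the events generated by \<open>Y'\<close>.\<close>

lemma integral_mult_eq_zero_of_cond_indep:
  fixes Y Y' :: "'a \<Rightarrow> 'b" and f g :: "'b \<Rightarrow> real"
  assumes F: "sigma_finite_subalgebra M F"
    and Y: "Y \<in> M \<rightarrow>\<^sub>M N" "Y' \<in> M \<rightarrow>\<^sub>M N"
    and cond_indep: "\<And>B B'. B \<in> sets N \<Longrightarrow> B' \<in> sets N \<Longrightarrow>
        AE x in M. real_cond_exp M F (\<lambda>x. indicator B (Y x) * indicator B' (Y' x)) x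
          = real_cond_exp M F (\<lambda>x. indicator B (Y x)) x * real_cond_exp M F (\<lambda>x. indicator B' (Y' x)) x"
    and f: "f \<in> borel_measurable N" "integrable M (\<lambda>x. f (Y x))"
      "AE x in M. real_cond_exp M F (\<lambda>x. f (Y x)) x = 0"
    and g: "g \<in> borel_measurable N" "integrable M (\<lambda>x. f (Y x) * g (Y' x))"
  shows "(\<integral>x. f (Y x) * g (Y' x) \<partial>M) = 0"
proof -
  define fp where "fp x = max 0 (f (Y x))" for x
  define fm where "fm x = max 0 (- f (Y x))" for x
  have f_split: "f (Y x) = fp x - fm x" for x unfolding fp_def fm_def by auto
  have fpm_M: "fp \<in> borel_measurable M" "fm \<in> borel_measurable M"
    unfolding fp_def fm_def using measurable_compose[OF Y(1) f(1)] by auto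
  have fpm_int: "integrable M fp" "integrable M fm" unfolding fp_def fm_def using f(2) by auto
  have fpm_le: "\<bar>fp x\<bar> \<le> \<bar>f (Y x)\<bar>" "\<bar>fm x\<bar> \<le> \<bar>f (Y x)\<bar>" for x unfolding fp_def fm_def by auto
  have events: "(\<integral>x. fp x * indicator B (Y' x) \<partial>M) = (\<integral>x. fm x * indicator B (Y' x) \<partial>M)"
    if B: "B \<in> sets N" for B
  proof -
    have ind_M: "(\<lambda>x. indicator B (Y' x) :: real) \<in> borel_measurable M"
      by (rule measurable_compose[OF Y(2) borel_measurable_indicator[OF B]])
    have fB: "integrable M (\<lambda>x. f (Y x) * indicator B (Y' x))"
      using measurable_compose[OF Y(1) f(1)] ind_M
      by (intro Bochner_Integration.integrable_bound[OF f(2)] borel_measurable_times)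
        (auto simp: indicator_def)
    have "integrable M (\<lambda>x. fp x * indicator B (Y' x))" "integrable M (\<lambda>x. fm x * indicator B (Y' x))"
      by (rule integrable_mult_dominated[OF fpm_M(1) fpm_le(1) ind_M fB],
          rule integrable_mult_dominated[OF fpm_M(2) fpm_le(2) ind_M fB])
    moreover have "(\<integral>x. f (Y x) * indicator B (Y' x) \<partial>M) = 0"
      by (rule integral_mult_indicator_eq_zero_of_cond_indep[OF F Y cond_indep f B])
    ultimately show ?thesis by (simp add: f_split left_diff_distrib)
  qed
  have "(\<integral>x. fp x * g (Y' x) \<partial>M) = (\<integral>x. fm x * g (Y' x) \<partial>M)"
    by (rule integral_density_pullback_eq[OF Y(2) fpm_M(1) _ fpm_int(1) fpm_M(2) _ fpm_int(2) events g(1)])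
      (auto simp: fp_def fm_def)
  moreover have "integrable M (\<lambda>x. fp x * g (Y' x))" "integrable M (\<lambda>x. fm x * g (Y' x))"
    by (rule integrable_mult_dominated[OF fpm_M(1) fpm_le(1) measurable_compose[OF Y(2) g(1)] g(2)],
        rule integrable_mult_dominated[OF fpm_M(2) fpm_le(2) measurable_compose[OF Y(2) g(1)] g(2)])
  ultimately show ?thesis by (simp add: f_split left_diff_distrib)
qed

lemma AE_LIMSEQ_zero_of_summable_second_moments:
  fixes A :: "nat \<Rightarrow> 'a \<Rightarrow> real"
  assumes A: "\<And>l. A l \<in> borel_measurable M" "\<And>l. integrable M (\<lambda>x. (A l x)\<^sup>2)"
    and bound: "\<And>l. (\<integral>x. (A l x)\<^sup>2 \<partial>M) \<le> C * r^l" and r: "0 \<le> r" "r < 1"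
  shows "AE x in M. (\<lambda>l. A l x) \<longlonglongrightarrow> 0"
proof -
  have "(\<integral>\<^sup>+x. (\<Sum>l. ennreal ((A l x)\<^sup>2)) \<partial>M) = (\<Sum>l. ennreal (\<integral>x. (A l x)\<^sup>2 \<partial>M))"
    using A by (simp add: nn_integral_suminf nn_integral_eq_integral)
  also have "\<dots> \<le> (\<Sum>l. ennreal (C * r^l))"
    by (intro suminf_le ennreal_leI bound) auto
  also have "\<dots> = ennreal (\<Sum>l. C * r^l)"
    using r order_trans[OF integral_nonneg_AE bound]
    by (intro suminf_ennreal2 summable_mult summable_geometric) auto
  also have "\<dots> < \<infinity>" by simp
  finally have "(\<integral>\<^sup>+x. (\<Sum>l. ennreal ((A l x)\<^sup>2)) \<partial>M) \<noteq> \<infinity>" by simp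
  then have "AE x in M. (\<Sum>l. ennreal ((A l x)\<^sup>2)) \<noteq> \<infinity>"
    using A by (intro nn_integral_PInf_AE) auto
  then show ?thesis
  proof eventually_elim
    case (elim x)
    then have "summable (\<lambda>l. (A l x)\<^sup>2)" by (intro summable_suminf_not_top) auto
    then have "(\<lambda>l. sqrt ((A l x)\<^sup>2)) \<longlonglongrightarrow> sqrt 0"
      by (intro tendsto_real_sqrt summable_LIMSEQ_zero)
    then show ?case by (simp add: tendsto_rabs_zero_cancel)
  qed
qed

lemma AE_LIMSEQ_div_power_zero:
  fixes S :: "nat \<Rightarrow> 'a \<Rightarrow> real"
  assumes S: "\<And>l. S l \<in> borel_measurable M" "\<And>l. integrable M (\<lambda>x. (S l x)\<^sup>2)"
    and bound: "\<And>l. (\<integral>x. (S l x)\<^sup>2 \<partial>M) \<le> C * q^l" and q: "q > 1"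
  shows "AE x in M. (\<lambda>l. S l x / q^l) \<longlonglongrightarrow> 0"
proof (rule AE_LIMSEQ_zero_of_summable_second_moments[where C=C and r="1/q"])
  fix l
  have ql: "q^l > 0" using q by simp
  show "(\<lambda>x. S l x / q^l) \<in> borel_measurable M" using S(1)[of l] by simp
  show "integrable M (\<lambda>x. (S l x / q^l)\<^sup>2)" using S(2)[of l] by (simp add: power_divide)
  have "(\<integral>x. (S l x / q^l)\<^sup>2 \<partial>M) = (\<integral>x. (S l x)\<^sup>2 \<partial>M) / (q^l)\<^sup>2"
    by (simp add: power_divide)
  also have "\<dots> \<le> C * q^l / (q^l)\<^sup>2" using bound[of l] by (intro divide_right_mono) auto
  also have "\<dots> = C * (1/q)^l" using ql by (simp add: power2_eq_square field_simps power_one_over)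
  finally show "(\<integral>x. (S l x / q^l)\<^sup>2 \<partial>M) \<le> C * (1/q)^l" .
qed (use q in auto)

end

section \<open>The observation process\<close>

locale observed_tree = prob_space M
  for M :: "'a measure" +
  fixes zeta :: "nat \<Rightarrow> 'a \<Rightarrow> nat \<times> nat"
    and delta :: "nat \<Rightarrow> 'a \<Rightarrow> nat"
    and p :: "nat \<Rightarrow> nat \<Rightarrow> nat \<Rightarrow> real"
    and pi :: real
    and z :: "nat \<Rightarrow> real"
  assumes zeta_val: "\<And>k \<omega>. k \<ge> 1 \<Longrightarrow> zeta k \<omega> \<in> {0,1} \<times> {0,1}"
    and zeta_indep: "indep_vars (\<lambda>_. count_space UNIV) zeta {1..}"
    and zeta_law: "\<And>k j0 j1. k \<ge> 1 \<Longrightarrow> j0 \<in> {0,1} \<Longrightarrow> j1 \<in> {0,1} \<Longrightarrow>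
                    measure M {\<omega> \<in> space M. zeta k \<omega> = (j0, j1)} = p (k mod 2) j0 j1"
    and delta1: "\<And>\<omega>. delta 1 \<omega> = 1"
    and delta0: "\<And>k \<omega>. k \<ge> 1 \<Longrightarrow> delta (2*k) \<omega> = delta k \<omega> * fst (zeta k \<omega>)"
    and delta_1: "\<And>k \<omega>. k \<ge> 1 \<Longrightarrow> delta (2*k+1) \<omega> = delta k \<omega> * snd (zeta k \<omega>)"
    and P_pos: "\<And>i j. i \<in> {0,1} \<Longrightarrow> j \<in> {0,1} \<Longrightarrow> Pmat p i j > 0"
    and pi_gt1: "pi > 1"
    and z_pos: "z 0 > 0" "z 1 > 0"
    and z_eig: "\<And>j. j \<in> {0,1} \<Longrightarrow> z 0 * Pmat p 0 j + z 1 * Pmat p 1 j = pi * z j"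
begin

definition coord :: "nat \<Rightarrow> nat \<times> nat \<Rightarrow> nat" where
  "coord j v = (if j = 0 then fst v else snd v)"

lemma delta_daughter: "k \<ge> 1 \<Longrightarrow> j < 2 \<Longrightarrow> delta (2*k+j) \<omega> = delta k \<omega> * coord j (zeta k \<omega>)"
  using delta0[of k \<omega>] delta_1[of k \<omega>] by (auto simp: coord_def less_2_cases_iff)

lemma delta_01: "k \<ge> 1 \<Longrightarrow> delta k \<omega> \<in> {0,1}"
proof (induction k rule: less_induct)
  case (less k)
  show ?case
  proof (cases "k = 1")
    case False
    then obtain q j where k: "k = 2*q+j" "j < 2" "q \<ge> 1"
      using less by (intro that[of "k div 2" "k mod 2"]) auto
    then have "delta q \<omega> \<in> {0,1}" using less by auto
    then show ?thesis
      using k zeta_val[of q \<omega>] by (auto simp: delta_daughter coord_def)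
  qed (use delta1 in auto)
qed

lemma delta_daughter_le: "k \<ge> 1 \<Longrightarrow> j < 2 \<Longrightarrow> delta (2*k+j) \<omega> \<le> delta k \<omega>"
  using delta_daughter[of k j \<omega>] zeta_val[of k \<omega>] delta_01[of k \<omega>]
  by (auto simp: coord_def less_2_cases_iff)

lemma sum_delta_eq_card:
  assumes "finite S" "S \<subseteq> {1..}"
  shows "(\<Sum>k\<in>S. real (delta k \<omega>)) = real (card {k\<in>S. delta k \<omega> = 1})"
proof -
  have "(\<Sum>k\<in>S. real (delta k \<omega>)) = (\<Sum>k\<in>S. if delta k \<omega> = 1 then 1 else 0)"
    using assms delta_01 by (intro sum.cong) force+
  then show ?thesis using assms(1) by (simp add: sum.If_cases Int_def)
qed

lemma zeta_measurable: "k \<ge> 1 \<Longrightarrow> zeta k \<in> M \<rightarrow>\<^sub>M count_space UNIV"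
  using zeta_indep unfolding indep_vars_def by auto

definition zeta_events :: "nat \<Rightarrow> 'a set set" where
  "zeta_events r = {zeta r -` A \<inter> space M | A. A \<in> sets (count_space UNIV)}"

definition sigma_zeta_on :: "nat set \<Rightarrow> 'a measure" where
  "sigma_zeta_on I = sigma (space M) (\<Union>r\<in>I. sigma_sets (space M) (zeta_events r))"

definition sigma_zeta :: "'a measure" where
  "sigma_zeta = sigma (space M) {zeta k -` A \<inter> space M | k A. k \<ge> 1}"

lemma space_sigma_zeta_on [simp]: "space (sigma_zeta_on I) = space M"
  unfolding sigma_zeta_on_def
  by (subst space_measure_of) (auto dest: sigma_sets_into_sp[rotated] simp: zeta_events_def)

lemma sets_sigma_zeta_on:
  "sets (sigma_zeta_on I) = sigma_sets (space M) (\<Union>r\<in>I. sigma_sets (space M) (zeta_events r))"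
  unfolding sigma_zeta_on_def
  by (subst sets_measure_of) (auto dest: sigma_sets_into_sp[rotated] simp: zeta_events_def)

lemma space_sigma_zeta [simp]: "space sigma_zeta = space M"
  unfolding sigma_zeta_def by (subst space_measure_of) auto

lemma sets_sigma_zeta: "sets sigma_zeta = sigma_sets (space M) {zeta k -` A \<inter> space M | k A. k \<ge> 1}"
  unfolding sigma_zeta_def by (subst sets_measure_of) auto

lemma subalgebra_sigma_zeta: "subalgebra M sigma_zeta"
proof -
  have "{zeta k -` A \<inter> space M | k A. k \<ge> 1} \<subseteq> sets M"
    using zeta_measurable by (auto simp: measurable_sets)
  then show ?thesis
    unfolding subalgebra_def sets_sigma_zeta by (simp add: sets.sigma_sets_subset)
qed

lemma zeta_measurable_sigma_zeta: "k \<ge> 1 \<Longrightarrow> zeta k \<in> sigma_zeta \<rightarrow>\<^sub>M count_space UNIV"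
  by (rule measurableI) (auto simp: sets_sigma_zeta)

lemma zeta_measurable_sigma_zeta_on:
  assumes "k \<in> I"
  shows "zeta k \<in> sigma_zeta_on I \<rightarrow>\<^sub>M count_space UNIV"
proof (rule measurableI)
  fix A :: "(nat \<times> nat) set"
  have "zeta k -` A \<inter> space M \<in> zeta_events k" unfolding zeta_events_def by auto
  then have "zeta k -` A \<inter> space M \<in> sigma_sets (space M) (\<Union>r\<in>I. sigma_sets (space M) (zeta_events r))"
    by (intro sigma_sets.Basic UN_I[OF assms])
  then show "zeta k -` A \<inter> space (sigma_zeta_on I) \<in> sets (sigma_zeta_on I)"
    by (simp add: sets_sigma_zeta_on)
qed simp

lemma delta_measurable_gen:
  assumes "space N = space M"
    and "\<And>r. 1 \<le> r \<Longrightarrow> r < m \<Longrightarrow> zeta r \<in> N \<rightarrow>\<^sub>M count_space UNIV"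
  shows "1 \<le> k \<Longrightarrow> k \<le> m \<Longrightarrow> (\<lambda>\<omega>. real (delta k \<omega>)) \<in> borel_measurable N"
proof (induction k rule: less_induct)
  case (less k)
  show ?case
  proof (cases "k = 1")
    case False
    then obtain q j where k: "k = 2*q+j" "j < 2" "q \<ge> 1"
      using less by (intro that[of "k div 2" "k mod 2"]) auto
    have "(\<lambda>\<omega>. real (delta q \<omega>)) \<in> borel_measurable N" using less k by auto
    moreover have "zeta q \<in> N \<rightarrow>\<^sub>M count_space UNIV" using assms(2) less k by auto
    then have "(\<lambda>\<omega>. real (coord j (zeta q \<omega>))) \<in> borel_measurable N"
      by (rule measurable_compose) simp
    ultimately show ?thesis using k by (simp add: delta_daughter)
  qed (use delta1 in auto)
qed

lemma delta_measurable_sigma_zeta: "1 \<le> k \<Longrightarrow> (\<lambda>\<omega>. real (delta k \<omega>)) \<in> borel_measurable sigma_zeta"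
  by (rule delta_measurable_gen[of sigma_zeta k]) (auto simp: zeta_measurable_sigma_zeta)

lemma delta_measurable_sigma_zeta_on:
  "1 \<le> k \<Longrightarrow> k \<le> m \<Longrightarrow> (\<lambda>\<omega>. real (delta k \<omega>)) \<in> borel_measurable (sigma_zeta_on {1..<m})"
  by (rule delta_measurable_gen[of _ m]) (auto simp: zeta_measurable_sigma_zeta_on)

lemma delta_measurable: "1 \<le> k \<Longrightarrow> (\<lambda>\<omega>. real (delta k \<omega>)) \<in> borel_measurable M"
  using measurable_from_subalg[OF subalgebra_sigma_zeta delta_measurable_sigma_zeta] .

lemma delta_integrable:
  assumes "k \<ge> 1"
  shows "integrable M (\<lambda>\<omega>. real (delta k \<omega>))"
proof (rule integrable_const_bound[where B=1])
  have "norm (real (delta k \<omega>)) \<le> 1" for \<omega> using delta_01[OF assms, of \<omega>] by auto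
  then show "AE \<omega> in M. norm (real (delta k \<omega>)) \<le> 1" by simp
qed (rule delta_measurable[OF assms])

lemma indep_set_sigma_zeta_past:
  assumes "m \<ge> 1"
  shows "indep_set (sets (sigma_zeta_on {1..<m})) (sets (sigma_zeta_on {m}))"
proof -
  define I where "I = case_bool {1..<m} {m}"
  have "indep_sets (\<lambda>r. sigma_sets (space M) (zeta_events r)) {1..}"
    using zeta_indep unfolding indep_vars_def zeta_events_def by auto
  then have "indep_sets (\<lambda>r. sigma_sets (space M) (zeta_events r)) (\<Union>b. I b)"
    by (rule indep_sets_mono_index[rotated]) (use assms in \<open>auto simp: I_def split: bool.splits\<close>)
  moreover have "Int_stable (sigma_sets (space M) (zeta_events r))" for r
  proof -
    have "sigma_algebra (space M) (sigma_sets (space M) (zeta_events r))"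
      by (rule sigma_algebra_sigma_sets) (auto simp: zeta_events_def)
    then show ?thesis using algebra.Int_stable sigma_algebra_def by blast
  qed
  moreover have "disjoint_family I"
    unfolding disjoint_family_on_def I_def by (auto split: bool.splits)
  ultimately have "indep_sets (\<lambda>b. sigma_sets (space M) (\<Union>r\<in>I b. sigma_sets (space M) (zeta_events r))) UNIV"
    by (rule indep_sets_collect_sigma)
  moreover have "(\<lambda>b. sigma_sets (space M) (\<Union>r\<in>I b. sigma_sets (space M) (zeta_events r)))
      = case_bool (sets (sigma_zeta_on {1..<m})) (sets (sigma_zeta_on {m}))"
    by (auto simp: I_def sets_sigma_zeta_on split: bool.splits)
  ultimately show ?thesis unfolding indep_set_def by simp
qed

lemma integral_mult_zeta:
  fixes \<Phi> :: "'a \<Rightarrow> real" and \<psi> :: "nat \<times> nat \<Rightarrow> real"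
  assumes m: "m \<ge> 1" and \<Phi>: "\<Phi> \<in> borel_measurable (sigma_zeta_on {1..<m})" "integrable M \<Phi>"
    and \<psi>: "integrable M (\<lambda>\<omega>. \<psi> (zeta m \<omega>))"
  shows "(\<integral>\<omega>. \<Phi> \<omega> * \<psi> (zeta m \<omega>) \<partial>M) = integral\<^sup>L M \<Phi> * (\<integral>\<omega>. \<psi> (zeta m \<omega>) \<partial>M)"
  using zeta_measurable_sigma_zeta_on[of m "{m}"]
  by (intro indep_set_integral_mult[OF indep_set_sigma_zeta_past[OF m] _ order_refl _ order_refl \<Phi> _ \<psi>])
    auto

lemma zeta_integral:
  fixes \<psi> :: "nat \<times> nat \<Rightarrow> real"
  assumes k: "k \<ge> 1"
  shows "integrable M (\<lambda>\<omega>. \<psi> (zeta k \<omega>))"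
    and "(\<integral>\<omega>. \<psi> (zeta k \<omega>) \<partial>M) = (\<Sum>v\<in>{0,1}\<times>{0,1}. \<psi> v * p (k mod 2) (fst v) (snd v))"
proof -
  define E where "E v = {\<omega> \<in> space M. zeta k \<omega> = v}" for v
  have E: "E v \<in> sets M" for v
    using measurable_sets[OF zeta_measurable[OF k], of "{v}"] by (simp add: E_def vimage_def Int_def conj_commute)
  have repr: "\<psi> (zeta k \<omega>) = (\<Sum>v\<in>{0,1}\<times>{0,1}. \<psi> v * indicator (E v) \<omega>)" if "\<omega> \<in> space M" for \<omega>
  proof -
    have "(\<Sum>v\<in>{0,1}\<times>{0,1}. \<psi> v * indicator (E v) \<omega>) = (\<Sum>v\<in>{0::nat,1}\<times>{0::nat,1}. if zeta k \<omega> = v then \<psi> v else 0)"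
      using that by (intro sum.cong) (auto simp: indicator_def E_def)
    also have "\<dots> = \<psi> (zeta k \<omega>)"
      using zeta_val[OF k, of \<omega>] by (subst sum.delta') auto
    finally show ?thesis by simp
  qed
  have sum_integrable: "integrable M (\<lambda>\<omega>. \<Sum>v\<in>{0::nat,1}\<times>{0::nat,1}. \<psi> v * indicator (E v) \<omega>)"
    using E by (intro Bochner_Integration.integrable_sum integrable_mult_right integrable_real_indicator)
      (auto simp: less_top[symmetric])
  show "integrable M (\<lambda>\<omega>. \<psi> (zeta k \<omega>))"
    by (rule Bochner_Integration.integrable_cong[THEN iffD2, OF refl repr sum_integrable])
  have "(\<integral>\<omega>. \<psi> (zeta k \<omega>) \<partial>M) = (\<integral>\<omega>. (\<Sum>v\<in>{0::nat,1}\<times>{0::nat,1}. \<psi> v * indicator (E v) \<omega>) \<partial>M)"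
    by (rule Bochner_Integration.integral_cong) (simp_all add: repr)
  also have "\<dots> = (\<Sum>v\<in>{0::nat,1}\<times>{0::nat,1}. \<psi> v * measure M (E v))"
    using E by (subst Bochner_Integration.integral_sum)
      (auto simp: Int_absorb2 sets.sets_into_space less_top[symmetric])
  also have "\<dots> = (\<Sum>v\<in>{0,1}\<times>{0,1}. \<psi> v * p (k mod 2) (fst v) (snd v))"
    using zeta_law[OF k] by (intro sum.cong) (auto simp: E_def)
  finally show "(\<integral>\<omega>. \<psi> (zeta k \<omega>) \<partial>M) = (\<Sum>v\<in>{0,1}\<times>{0,1}. \<psi> v * p (k mod 2) (fst v) (snd v))" .
qed

lemma integral_coord_zeta: "k \<ge> 1 \<Longrightarrow> j < 2 \<Longrightarrow> (\<integral>\<omega>. real (coord j (zeta k \<omega>)) \<partial>M) = Pmat p (k mod 2) j"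
  by (subst zeta_integral(2)) (auto simp: coord_def Pmat_def less_2_cases_iff)

lemma integral_both_coords_zeta:
  "k \<ge> 1 \<Longrightarrow> (\<integral>\<omega>. real (fst (zeta k \<omega>) * snd (zeta k \<omega>)) \<partial>M) = p (k mod 2) 1 1"
  using zeta_integral(2)[of k "\<lambda>v. real (fst v * snd v)"] by simp

lemma integral_delta_daughter:
  assumes q: "q \<ge> 1" and j: "j < 2"
  shows "(\<integral>\<omega>. real (delta (2*q+j) \<omega>) \<partial>M) = (\<integral>\<omega>. real (delta q \<omega>) \<partial>M) * Pmat p (q mod 2) j"
proof -
  have "(\<integral>\<omega>. real (delta (2*q+j) \<omega>) \<partial>M) = (\<integral>\<omega>. real (delta q \<omega>) * real (coord j (zeta q \<omega>)) \<partial>M)"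
    by (simp add: delta_daughter[OF q j])
  also have "\<dots> = (\<integral>\<omega>. real (delta q \<omega>) \<partial>M) * (\<integral>\<omega>. real (coord j (zeta q \<omega>)) \<partial>M)"
    by (rule integral_mult_zeta[OF q delta_measurable_sigma_zeta_on[OF q order_refl]
          delta_integrable[OF q] zeta_integral(1)[OF q]])
  finally show ?thesis using integral_coord_zeta[OF q j] by simp
qed

subsection \<open>Growth of the expected number of observed individuals\<close>

definition expected_count :: "nat \<Rightarrow> nat \<Rightarrow> real" where
  "expected_count l i = (\<Sum>k\<in>{k \<in> genG l. k mod 2 = i}. \<integral>\<omega>. real (delta k \<omega>) \<partial>M)"

lemma expected_count_0: "expected_count 0 0 = 0" "expected_count 0 1 = 1"
proof -
  have "{k \<in> {1::nat}. k mod 2 = 0} = {}" "{k \<in> {1::nat}. k mod 2 = 1} = {1}" by auto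
  then show "expected_count 0 0 = 0" "expected_count 0 1 = 1"
    unfolding expected_count_def genG_0 using delta1 by (simp_all add: prob_space)
qed

lemma expected_count_Suc:
  assumes j: "j < 2"
  shows "expected_count (Suc l) j = expected_count l 0 * Pmat p 0 j + expected_count l 1 * Pmat p 1 j"
proof -
  have "expected_count (Suc l) j = (\<Sum>q\<in>genG l. (\<integral>\<omega>. real (delta q \<omega>) \<partial>M) * Pmat p (q mod 2) j)"
    unfolding expected_count_def sum_genG_Suc_type[OF j]
    by (intro sum.cong refl integral_delta_daughter[OF genG_ge1 j])
  also have "\<dots> = (\<Sum>q\<in>{q\<in>genG l. q mod 2 = 0}. (\<integral>\<omega>. real (delta q \<omega>) \<partial>M) * Pmat p 0 j)
      + (\<Sum>q\<in>{q\<in>genG l. q mod 2 = 1}. (\<integral>\<omega>. real (delta q \<omega>) \<partial>M) * Pmat p 1 j)"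
    by (subst sum_split_parity) (auto intro!: arg_cong2[where f="(+)"] sum.cong)
  finally show ?thesis unfolding expected_count_def by (simp add: sum_distrib_right)
qed

lemma pi_char_root: "Pmat p 1 0 * Pmat p 0 1 = (pi - Pmat p 0 0) * (pi - Pmat p 1 1)"
proof -
  have e0: "z 1 * Pmat p 1 0 = z 0 * (pi - Pmat p 0 0)" using z_eig[of 0] by (simp add: algebra_simps)
  have e1: "z 0 * Pmat p 0 1 = z 1 * (pi - Pmat p 1 1)" using z_eig[of 1] by (simp add: algebra_simps)
  have "(z 0 * z 1) * (Pmat p 1 0 * Pmat p 0 1) = (z 1 * Pmat p 1 0) * (z 0 * Pmat p 0 1)" by simp
  also have "\<dots> = (z 0 * z 1) * ((pi - Pmat p 0 0) * (pi - Pmat p 1 1))" unfolding e0 e1 by simp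
  finally show ?thesis using z_pos by simp
qed

lemma pi_gt_Pmat_00: "Pmat p 0 0 < pi"
proof -
  have "z 0 * (pi - Pmat p 0 0) = z 1 * Pmat p 1 0" using z_eig[of 0] by (simp add: algebra_simps)
  also have "\<dots> > 0" using z_pos P_pos[of 1 0] by simp
  finally show ?thesis using z_pos by (simp add: zero_less_mult_iff)
qed

text \<open>The vector \<open>(p\<^sub>0\<^sub>1, \<pi> - p\<^sub>0\<^sub>0)\<close> is a positive right eigenvector of \<open>P\<close> for \<open>\<pi>\<close>.\<close>

lemma expected_count_right_eigenvector:
  "expected_count l 0 * Pmat p 0 1 + expected_count l 1 * (pi - Pmat p 0 0) = pi ^ l * (pi - Pmat p 0 0)"
proof (induction l)
  case (Suc l)
  have "expected_count (Suc l) 0 * Pmat p 0 1 + expected_count (Suc l) 1 * (pi - Pmat p 0 0)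
      = expected_count l 0 * (Pmat p 0 0 * Pmat p 0 1 + Pmat p 0 1 * (pi - Pmat p 0 0))
        + expected_count l 1 * (Pmat p 1 0 * Pmat p 0 1 + Pmat p 1 1 * (pi - Pmat p 0 0))"
    by (simp add: expected_count_Suc algebra_simps)
  also have "Pmat p 0 0 * Pmat p 0 1 + Pmat p 0 1 * (pi - Pmat p 0 0) = pi * Pmat p 0 1"
    by (simp add: algebra_simps)
  also have "Pmat p 1 0 * Pmat p 0 1 + Pmat p 1 1 * (pi - Pmat p 0 0) = pi * (pi - Pmat p 0 0)"
    using pi_char_root by (simp add: algebra_simps)
  also have "expected_count l 0 * (pi * Pmat p 0 1) + expected_count l 1 * (pi * (pi - Pmat p 0 0))
      = pi * (expected_count l 0 * Pmat p 0 1 + expected_count l 1 * (pi - Pmat p 0 0))"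
    by (simp add: algebra_simps)
  finally show ?case using Suc by simp
next
  case 0
  show ?case unfolding expected_count_0 by simp
qed

lemma expected_generation_size_bound:
  obtains C where "\<And>l. (\<Sum>k\<in>genG l. \<integral>\<omega>. real (delta k \<omega>) \<partial>M) \<le> C * pi ^ l"
proof
  define v0 v1 where "v0 = Pmat p 0 1" and "v1 = pi - Pmat p 0 0"
  have v: "v0 > 0" "v1 > 0" unfolding v0_def v1_def using P_pos pi_gt_Pmat_00 by auto
  fix l
  have nonneg: "expected_count l i \<ge> 0" for i
    unfolding expected_count_def by (intro sum_nonneg integral_nonneg_AE) auto
  have eig: "expected_count l 0 * v0 + expected_count l 1 * v1 = pi ^ l * v1"
    unfolding v0_def v1_def by (rule expected_count_right_eigenvector)
  moreover have "expected_count l 0 * v0 \<ge> 0" "expected_count l 1 * v1 \<ge> 0"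
    using nonneg v by simp_all
  ultimately have "expected_count l 0 * v0 \<le> pi ^ l * v1" "expected_count l 1 * v1 \<le> pi ^ l * v1"
    by linarith+
  then have "expected_count l 0 \<le> v1 / v0 * pi ^ l" "expected_count l 1 \<le> pi ^ l"
    using v by (simp_all add: field_simps)
  moreover have "(\<Sum>k\<in>genG l. \<integral>\<omega>. real (delta k \<omega>) \<partial>M) = expected_count l 0 + expected_count l 1"
    unfolding expected_count_def by (rule sum_split_parity) simp
  ultimately show "(\<Sum>k\<in>genG l. \<integral>\<omega>. real (delta k \<omega>) \<partial>M) \<le> (v1 / v0 + 1) * pi ^ l"
    by (simp add: algebra_simps)
qed

text \<open>For \<open>k < m\<close> the first factor is a function of \<open>\<zeta>\<^sub>1, \<dots>, \<zeta>\<^sub>m\<^sub>-\<^sub>1\<close>, hence independent of \<open>\<zeta>\<^sub>m\<close>.\<close>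

lemma integral_mult_centred_zeta_eq_zero:
  fixes g h :: "nat \<times> nat \<Rightarrow> real"
  assumes km: "1 \<le> k" "k < m"
    and g_bound: "\<And>v. v \<in> {0,1}\<times>{0,1} \<Longrightarrow> \<bar>g v\<bar> \<le> H"
    and h_centred: "(\<integral>\<omega>. h (zeta m \<omega>) \<partial>M) = 0"
  shows "(\<integral>\<omega>. real (delta k \<omega>) * g (zeta k \<omega>) * (real (delta m \<omega>) * h (zeta m \<omega>)) \<partial>M) = 0"
proof -
  have m1: "m \<ge> 1" using km by simp
  define \<Phi> where "\<Phi> \<omega> = real (delta k \<omega>) * g (zeta k \<omega>) * real (delta m \<omega>)" for \<omega>
  have "(\<lambda>\<omega>. g (zeta k \<omega>)) \<in> borel_measurable (sigma_zeta_on {1..<m})"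
    using km by (intro measurable_compose[OF zeta_measurable_sigma_zeta_on]) auto
  then have "\<Phi> \<in> borel_measurable (sigma_zeta_on {1..<m})"
    unfolding \<Phi>_def using delta_measurable_sigma_zeta_on[OF km(1), of m]
      delta_measurable_sigma_zeta_on[OF m1 order_refl] km by simp
  moreover have "integrable M \<Phi>"
  proof (rule integrable_const_bound[where B=H])
    have "H \<ge> 0" using g_bound[of "(0, 0)"] by auto
    then have "norm (\<Phi> \<omega>) \<le> H" for \<omega>
      using g_bound[OF zeta_val[OF km(1)], of \<omega>] delta_01[OF km(1), of \<omega>] delta_01[OF m1, of \<omega>]
      unfolding \<Phi>_def by auto
    then show "AE \<omega> in M. norm (\<Phi> \<omega>) \<le> H" by simp
    have "(\<lambda>\<omega>. g (zeta k \<omega>)) \<in> borel_measurable M"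
      by (rule measurable_compose[OF zeta_measurable[OF km(1)]]) simp
    then show "\<Phi> \<in> borel_measurable M"
      unfolding \<Phi>_def using delta_measurable[OF km(1)] delta_measurable[OF m1] by simp
  qed
  ultimately have "(\<integral>\<omega>. \<Phi> \<omega> * h (zeta m \<omega>) \<partial>M) = integral\<^sup>L M \<Phi> * (\<integral>\<omega>. h (zeta m \<omega>) \<partial>M)"
    by (intro integral_mult_zeta[OF m1] zeta_integral(1)[OF m1])
  then show ?thesis using h_centred unfolding \<Phi>_def by (simp add: ac_simps)
qed

lemma integral_square_sum_centred_zeta:
  fixes h :: "nat \<Rightarrow> nat \<times> nat \<Rightarrow> real"
  assumes S: "finite S" "S \<subseteq> {1..}"
    and h_bound: "\<And>k v. k \<in> S \<Longrightarrow> v \<in> {0,1}\<times>{0,1} \<Longrightarrow> \<bar>h k v\<bar> \<le> H"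
    and h_centred: "\<And>k. k \<in> S \<Longrightarrow> (\<integral>\<omega>. h k (zeta k \<omega>) \<partial>M) = 0"
  shows "integrable M (\<lambda>\<omega>. (\<Sum>k\<in>S. real (delta k \<omega>) * h k (zeta k \<omega>))\<^sup>2)"
    and "(\<integral>\<omega>. (\<Sum>k\<in>S. real (delta k \<omega>) * h k (zeta k \<omega>))\<^sup>2 \<partial>M)
          \<le> H\<^sup>2 * (\<Sum>k\<in>S. \<integral>\<omega>. real (delta k \<omega>) \<partial>M)"
proof -
  define A where "A k \<omega> = real (delta k \<omega>) * h k (zeta k \<omega>)" for k \<omega>
  have k1: "k \<ge> 1" if "k \<in> S" for k using S that by auto
  have A_M: "A k \<in> borel_measurable M" if "k \<in> S" for k
    unfolding A_def using delta_measurable[OF k1[OF that]]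
      measurable_compose[OF zeta_measurable[OF k1[OF that]], of "h k" borel] by simp
  have A_bound: "\<bar>A k \<omega>\<bar> \<le> H" "(A k \<omega>)\<^sup>2 \<le> H\<^sup>2 * real (delta k \<omega>)" if "k \<in> S" for k \<omega>
  proof -
    have h: "\<bar>h k (zeta k \<omega>)\<bar> \<le> H" using h_bound[OF that zeta_val[OF k1[OF that]]] .
    then have "(h k (zeta k \<omega>))\<^sup>2 \<le> H\<^sup>2" using power_mono[OF h abs_ge_zero, of 2] by simp
    then show "\<bar>A k \<omega>\<bar> \<le> H" "(A k \<omega>)\<^sup>2 \<le> H\<^sup>2 * real (delta k \<omega>)"
      using h delta_01[OF k1[OF that], of \<omega>] unfolding A_def by (auto simp: power_mult_distrib)
  qed
  have A_int: "integrable M (\<lambda>\<omega>. A k \<omega> * A m \<omega>)" if "k \<in> S" "m \<in> S" for k m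
  proof (rule integrable_const_bound[where B="H*H"])
    have "\<bar>A k \<omega>\<bar> * \<bar>A m \<omega>\<bar> \<le> H * H" for \<omega>
      using A_bound(1)[OF that(1)] A_bound(1)[OF that(2)]
      by (intro mult_mono) (auto intro: order_trans[OF abs_ge_zero])
    then show "AE \<omega> in M. norm (A k \<omega> * A m \<omega>) \<le> H * H" by (simp add: abs_mult)
    show "(\<lambda>\<omega>. A k \<omega> * A m \<omega>) \<in> borel_measurable M"
      using A_M[OF that(1)] A_M[OF that(2)] by (rule borel_measurable_times)
  qed
  have orthogonal: "(\<integral>\<omega>. A k \<omega> * A m \<omega> \<partial>M) = 0" if "k \<in> S" "m \<in> S" "k \<noteq> m" for k m
  proof (cases "k < m")
    case True
    show ?thesis unfolding A_def
      by (rule integral_mult_centred_zeta_eq_zero[OF k1[OF that(1)] True h_bound[OF that(1)]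
            h_centred[OF that(2)]])
  next
    case False
    then have "m < k" using that(3) by simp
    from integral_mult_centred_zeta_eq_zero[OF k1[OF that(2)] this h_bound[OF that(2)] h_centred[OF that(1)]]
    show ?thesis unfolding A_def by (simp add: mult.commute)
  qed
  note orthogonal_sum = integral_square_sum_orthogonal[OF S(1) A_int orthogonal]
  show "integrable M (\<lambda>\<omega>. (\<Sum>k\<in>S. real (delta k \<omega>) * h k (zeta k \<omega>))\<^sup>2)"
    using orthogonal_sum(1) unfolding A_def by simp
  have "(\<Sum>k\<in>S. \<integral>\<omega>. (A k \<omega>)\<^sup>2 \<partial>M) \<le> (\<Sum>k\<in>S. \<integral>\<omega>. H\<^sup>2 * real (delta k \<omega>) \<partial>M)"
  proof (rule sum_mono, rule integral_mono)
    fix k assume k: "k \<in> S"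
    show "integrable M (\<lambda>\<omega>. (A k \<omega>)\<^sup>2)" using A_int[OF k k] by (simp add: power2_eq_square)
    show "integrable M (\<lambda>\<omega>. H\<^sup>2 * real (delta k \<omega>))" using delta_integrable[OF k1[OF k]] by simp
    show "(A k \<omega>)\<^sup>2 \<le> H\<^sup>2 * real (delta k \<omega>)" for \<omega> by (rule A_bound(2)[OF k])
  qed
  then show "(\<integral>\<omega>. (\<Sum>k\<in>S. real (delta k \<omega>) * h k (zeta k \<omega>))\<^sup>2 \<partial>M)
      \<le> H\<^sup>2 * (\<Sum>k\<in>S. \<integral>\<omega>. real (delta k \<omega>) \<partial>M)"
    using orthogonal_sum(2) unfolding A_def by (simp add: sum_distrib_left)
qed

lemma AE_LIMSEQ_centred_zeta_sum:
  fixes h :: "nat \<Rightarrow> nat \<times> nat \<Rightarrow> real"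
  assumes S: "\<And>l. S l \<subseteq> genG l"
    and h_bound: "\<And>l k v. k \<in> S l \<Longrightarrow> v \<in> {0,1}\<times>{0,1} \<Longrightarrow> \<bar>h k v\<bar> \<le> H"
    and h_centred: "\<And>l k. k \<in> S l \<Longrightarrow> (\<integral>\<omega>. h k (zeta k \<omega>) \<partial>M) = 0"
  shows "AE \<omega> in M. (\<lambda>l. (\<Sum>k\<in>S l. real (delta k \<omega>) * h k (zeta k \<omega>)) / pi^l) \<longlonglongrightarrow> 0"
proof -
  obtain C where C: "\<And>l. (\<Sum>k\<in>genG l. \<integral>\<omega>. real (delta k \<omega>) \<partial>M) \<le> C * pi ^ l"
    using expected_generation_size_bound by blast
  have S_fin: "finite (S l)" for l using S by (rule finite_subset) simp
  have S1: "S l \<subseteq> {1..}" for l using S genG_ge1 by fastforce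
  have L2: "integrable M (\<lambda>\<omega>. (\<Sum>k\<in>S l. real (delta k \<omega>) * h k (zeta k \<omega>))\<^sup>2)"
    "(\<integral>\<omega>. (\<Sum>k\<in>S l. real (delta k \<omega>) * h k (zeta k \<omega>))\<^sup>2 \<partial>M)
       \<le> H\<^sup>2 * (\<Sum>k\<in>S l. \<integral>\<omega>. real (delta k \<omega>) \<partial>M)" for l
    by (rule integral_square_sum_centred_zeta; (rule S_fin S1 h_bound h_centred | assumption)+)+
  show ?thesis
  proof (rule AE_LIMSEQ_div_power_zero[OF _ L2(1) _ pi_gt1])
    fix l
    show "(\<lambda>\<omega>. \<Sum>k\<in>S l. real (delta k \<omega>) * h k (zeta k \<omega>)) \<in> borel_measurable M"
    proof (intro borel_measurable_sum borel_measurable_times)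
      fix k assume "k \<in> S l"
      then have k: "k \<ge> 1" using S1 by auto
      show "(\<lambda>\<omega>. real (delta k \<omega>)) \<in> borel_measurable M" by (rule delta_measurable[OF k])
      show "(\<lambda>\<omega>. h k (zeta k \<omega>)) \<in> borel_measurable M"
        by (rule measurable_compose[OF zeta_measurable[OF k]]) simp
    qed
    have "(\<Sum>k\<in>S l. \<integral>\<omega>. real (delta k \<omega>) \<partial>M) \<le> (\<Sum>k\<in>genG l. \<integral>\<omega>. real (delta k \<omega>) \<partial>M)"
      using S by (intro sum_mono2) auto
    also have "\<dots> \<le> C * pi ^ l" by (rule C)
    finally have "H\<^sup>2 * (\<Sum>k\<in>S l. \<integral>\<omega>. real (delta k \<omega>) \<partial>M) \<le> H\<^sup>2 * (C * pi ^ l)"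
      by (rule mult_left_mono) simp
    with L2(2)[of l]
    show "(\<integral>\<omega>. (\<Sum>k\<in>S l. real (delta k \<omega>) * h k (zeta k \<omega>))\<^sup>2 \<partial>M) \<le> H\<^sup>2 * C * pi ^ l"
      by (simp add: mult.assoc)
  qed
qed

end

section \<open>The bifurcating autoregressive process\<close>

locale bar = observed_tree M zeta delta p pi z
  for M :: "'a measure" and zeta delta p pi z +
  fixes X eps :: "nat \<Rightarrow> 'a \<Rightarrow> real"
    and a b c d sigma2 tau4 rhop :: real
    and W :: "'a \<Rightarrow> real"
  assumes X_meas: "\<And>k. k \<ge> 1 \<Longrightarrow> X k \<in> borel_measurable M"
    and BAR0: "\<And>k \<omega>. k \<ge> 1 \<Longrightarrow> X (2*k) \<omega> = a + b * X k \<omega> + eps (2*k) \<omega>"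
    and BAR1: "\<And>k \<omega>. k \<ge> 1 \<Longrightarrow> X (2*k+1) \<omega> = c + d * X k \<omega> + eps (2*k+1) \<omega>"
    and eps_L8: "\<And>n k. k \<in> genG (Suc n) \<Longrightarrow> integrable M (\<lambda>\<omega>. (eps k \<omega>) ^ 8)"
    and ce2: "\<And>n k. k \<in> genG (Suc n) \<Longrightarrow>
               AE \<omega> in M. real_cond_exp M (natF M X n) (\<lambda>x. (eps k x)^2) \<omega> = sigma2"
    and ce4: "\<And>n k. k \<in> genG (Suc n) \<Longrightarrow>
               AE \<omega> in M. real_cond_exp M (natF M X n) (\<lambda>x. (eps k x)^4) \<omega> = tau4"
    and cc1: "\<And>n k. k \<in> genG n \<Longrightarrow>
               AE \<omega> in M. real_cond_exp M (natF M X n) (\<lambda>x. eps (2*k) x * eps (2*k+1) x) \<omega>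
                             = rhop * sigma2"
    and HN2: "\<And>n. cond_indep_given M (natF M X n)
                    (\<lambda>k x. (eps (2*k) x, eps (2*k+1) x)) (genG n)"
    and HI: "indep_set
               (sets (sigma (space M) {zeta k -` A \<inter> space M | k A. k \<ge> 1}))
               (sets (sigma (space M) {X k -` A \<inter> space M | k A. k \<ge> 1 \<and> A \<in> sets borel}))"
    and W_lim: "AE \<omega> in M. \<forall>i\<in>{0,1}.
                  (\<lambda>n. real (card {k \<in> genG n. k mod 2 = i \<and> delta k \<omega> = 1}) / pi ^ n)
                    \<longlonglongrightarrow> W \<omega> * z i"
begin

lemma sigma_finite_subalgebra_natF: "sigma_finite_subalgebra M (natF M X n)"
proof -
  have gen: "{X k -` A \<inter> space M | k A. k \<in> treeT n \<and> A \<in> sets borel} \<subseteq> sets M"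
    using X_meas unfolding treeT_def by (auto simp: measurable_sets)
  have "{X k -` A \<inter> space M | k A. k \<in> treeT n \<and> A \<in> sets borel} \<subseteq> Pow (space M)" by auto
  then have "sets (natF M X n) \<subseteq> sets M" "space (natF M X n) = space M"
    unfolding natF_def using gen by (simp_all add: sets.sigma_sets_subset)
  then have "subalgebra M (natF M X n)" unfolding subalgebra_def by simp
  then interpret finite_measure_subalgebra M "natF M X n" by unfold_locales
  show ?thesis by unfold_locales
qed

lemma real_cond_exp_natF_const: "AE \<omega> in M. real_cond_exp M (natF M X n) (\<lambda>_. r) \<omega> = r"
proof -
  interpret sigma_finite_subalgebra M "natF M X n" by (rule sigma_finite_subalgebra_natF)
  show ?thesis by (rule real_cond_exp_F_meas) auto
qed

definition sigma_X :: "'a measure" where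
  "sigma_X = sigma (space M) {X k -` A \<inter> space M | k A. k \<ge> 1 \<and> A \<in> sets borel}"

lemma space_sigma_X [simp]: "space sigma_X = space M"
  unfolding sigma_X_def by (subst space_measure_of) auto

lemma sets_sigma_X: "sets sigma_X = sigma_sets (space M) {X k -` A \<inter> space M | k A. k \<ge> 1 \<and> A \<in> sets borel}"
  unfolding sigma_X_def by (subst sets_measure_of) auto

lemma subalgebra_sigma_X: "subalgebra M sigma_X"
proof -
  have "{X k -` A \<inter> space M | k A. k \<ge> 1 \<and> A \<in> sets borel} \<subseteq> sets M"
    using X_meas by (auto simp: measurable_sets)
  then show ?thesis unfolding subalgebra_def sets_sigma_X by (simp add: sets.sigma_sets_subset)
qed

lemma X_measurable_sigma_X: "k \<ge> 1 \<Longrightarrow> X k \<in> borel_measurable sigma_X"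
  by (rule measurableI) (auto simp: sets_sigma_X)

lemma eps_measurable_sigma_X:
  assumes "k \<ge> 2"
  shows "eps k \<in> borel_measurable sigma_X"
proof -
  obtain q j where k: "k = 2*q+j" "j < 2" "q \<ge> 1"
    using assms by (intro that[of "k div 2" "k mod 2"]) auto
  have "eps k \<omega> = X k \<omega> - (if j = 0 then a + b * X q \<omega> else c + d * X q \<omega>)" for \<omega>
  proof (cases "j = 0")
    case True
    then show ?thesis using k BAR0[OF k(3), of \<omega>] by simp
  next
    case False
    then have "j = 1" using k(2) by simp
    then show ?thesis using k BAR1[OF k(3), of \<omega>] by simp
  qed
  then have "eps k = (\<lambda>\<omega>. X k \<omega> - (if j = 0 then a + b * X q \<omega> else c + d * X q \<omega>))" by blast
  then show ?thesis using X_measurable_sigma_X[of q] X_measurable_sigma_X[of k] k by simp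
qed

lemma eps_measurable: "k \<ge> 2 \<Longrightarrow> eps k \<in> borel_measurable M"
  using measurable_from_subalg[OF subalgebra_sigma_X eps_measurable_sigma_X] .

lemma integral_mult_process_observation:
  fixes U V :: "'a \<Rightarrow> real"
  assumes "U \<in> borel_measurable sigma_X" "V \<in> borel_measurable sigma_zeta" "integrable M U" "integrable M V"
  shows "(\<integral>\<omega>. U \<omega> * V \<omega> \<partial>M) = integral\<^sup>L M U * integral\<^sup>L M V"
  using indep_set_integral_mult[OF HI[folded sigma_zeta_def sigma_X_def] _ order_refl _ order_refl assms(2,4,1,3)]
  by (simp add: mult.commute)

definition noise_pair :: "nat \<Rightarrow> 'a \<Rightarrow> real \<times> real" where
  "noise_pair q \<omega> = (eps (2*q) \<omega>, eps (2*q+1) \<omega>)"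

lemma noise_pair_measurable_sigma_X: "q \<ge> 1 \<Longrightarrow> noise_pair q \<in> borel_measurable sigma_X"
  unfolding noise_pair_def by (rule borel_measurable_Pair) (rule eps_measurable_sigma_X; simp)+

lemma noise_pair_measurable: "q \<ge> 1 \<Longrightarrow> noise_pair q \<in> borel_measurable M"
  using measurable_from_subalg[OF subalgebra_sigma_X noise_pair_measurable_sigma_X] .

lemma eps_moments:
  assumes k: "k \<in> genG (Suc n)"
  shows "integrable M (\<lambda>\<omega>. (eps k \<omega>)^4)" "integrable M (\<lambda>\<omega>. (eps k \<omega>)\<^sup>2)"
    and "(\<integral>\<omega>. (eps k \<omega>)^4 \<partial>M) = tau4" "(\<integral>\<omega>. (eps k \<omega>)\<^sup>2 \<partial>M) = sigma2"
proof -
  interpret F: sigma_finite_subalgebra M "natF M X n" by (rule sigma_finite_subalgebra_natF)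
  have m: "eps k \<in> borel_measurable M" using eps_measurable genG_Suc_ge2[OF k] by simp
  have "integrable M (\<lambda>\<omega>. ((eps k \<omega>)^4)\<^sup>2)" using eps_L8[OF k] by (simp add: power_mult[symmetric])
  from square_integrable_imp_integrable[OF _ this]
  show i4: "integrable M (\<lambda>\<omega>. (eps k \<omega>)^4)" using m by simp
  then have "integrable M (\<lambda>\<omega>. ((eps k \<omega>)\<^sup>2)\<^sup>2)" by (simp add: power_mult[symmetric])
  from square_integrable_imp_integrable[OF _ this]
  show i2: "integrable M (\<lambda>\<omega>. (eps k \<omega>)\<^sup>2)" using m by simp
  have "(\<integral>\<omega>. (eps k \<omega>)^4 \<partial>M) = (\<integral>\<omega>. real_cond_exp M (natF M X n) (\<lambda>x. (eps k x)^4) \<omega> \<partial>M)"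
    by (rule F.real_cond_exp_int(2)[OF i4, symmetric])
  also have "\<dots> = (\<integral>\<omega>. tau4 \<partial>M)" by (rule integral_cong_AE) (use ce4[OF k] in auto)
  finally show "(\<integral>\<omega>. (eps k \<omega>)^4 \<partial>M) = tau4" by (simp add: prob_space)
  have "(\<integral>\<omega>. (eps k \<omega>)\<^sup>2 \<partial>M) = (\<integral>\<omega>. real_cond_exp M (natF M X n) (\<lambda>x. (eps k x)\<^sup>2) \<omega> \<partial>M)"
    by (rule F.real_cond_exp_int(2)[OF i2, symmetric])
  also have "\<dots> = (\<integral>\<omega>. sigma2 \<partial>M)" by (rule integral_cong_AE) (use ce2[OF k] in auto)
  finally show "(\<integral>\<omega>. (eps k \<omega>)\<^sup>2 \<partial>M) = sigma2" by (simp add: prob_space)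
qed

lemma noise_pair_cond_indep:
  assumes q: "q \<in> genG n" "q' \<in> genG n" "q \<noteq> q'" and B: "B \<in> sets borel" "B' \<in> sets borel"
  shows "AE \<omega> in M. real_cond_exp M (natF M X n)
             (\<lambda>x. indicator B (noise_pair q x) * indicator B' (noise_pair q' x)) \<omega>
           = real_cond_exp M (natF M X n) (\<lambda>x. indicator B (noise_pair q x)) \<omega>
             * real_cond_exp M (natF M X n) (\<lambda>x. indicator B' (noise_pair q' x)) \<omega>"
proof -
  let ?B = "\<lambda>j. if j = q then B else B'"
  have "AE \<omega> in M. real_cond_exp M (natF M X n) (\<lambda>x. \<Prod>j\<in>{q,q'}. indicator (?B j) (noise_pair j x)) \<omega>
      = (\<Prod>j\<in>{q,q'}. real_cond_exp M (natF M X n) (\<lambda>x. indicator (?B j) (noise_pair j x)) \<omega>)"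
  proof -
    have "\<And>J BB. J \<subseteq> genG n \<Longrightarrow> finite J \<Longrightarrow> (\<forall>j\<in>J. BB j \<in> sets borel) \<Longrightarrow>
        AE \<omega> in M. real_cond_exp M (natF M X n) (\<lambda>x. \<Prod>j\<in>J. indicator (BB j) (noise_pair j x)) \<omega>
          = (\<Prod>j\<in>J. real_cond_exp M (natF M X n) (\<lambda>x. indicator (BB j) (noise_pair j x)) \<omega>)"
      using HN2[of n] unfolding cond_indep_given_def noise_pair_def by blast
    from this[of "{q,q'}" ?B] show ?thesis using q B by simp
  qed
  then show ?thesis using q(3) by simp
qed

lemma integral_noise_pair_orthogonal:
  fixes f :: "real \<times> real \<Rightarrow> real"
  assumes q: "q \<in> genG n" "q' \<in> genG n" "q \<noteq> q'"
    and f: "f \<in> borel_measurable borel"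
    and f_sq: "\<And>n q. q \<in> genG n \<Longrightarrow> integrable M (\<lambda>\<omega>. (f (noise_pair q \<omega>))\<^sup>2)"
    and f_centred: "AE \<omega> in M. real_cond_exp M (natF M X n) (\<lambda>\<omega>. f (noise_pair q \<omega>)) \<omega> = 0"
  shows "(\<integral>\<omega>. f (noise_pair q \<omega>) * f (noise_pair q' \<omega>) \<partial>M) = 0"
proof (rule integral_mult_eq_zero_of_cond_indep[where Y="noise_pair q" and Y'="noise_pair q'"
      and f=f and g=f and N=borel, OF sigma_finite_subalgebra_natF])
  have q1: "q \<ge> 1" "q' \<ge> 1" using q genG_ge1 by auto
  show Y: "noise_pair q \<in> borel_measurable M" "noise_pair q' \<in> borel_measurable M"
    using noise_pair_measurable q1 by auto
  have fY: "(\<lambda>\<omega>. f (noise_pair j \<omega>)) \<in> borel_measurable M" if "j \<ge> 1" for j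
    using measurable_compose[OF noise_pair_measurable[OF that] f] .
  show "integrable M (\<lambda>\<omega>. f (noise_pair q \<omega>))"
    using square_integrable_imp_integrable[OF fY[OF q1(1)] f_sq[OF q(1)]] .
  show "integrable M (\<lambda>\<omega>. f (noise_pair q \<omega>) * f (noise_pair q' \<omega>))"
    by (rule integrable_mult_of_square_integrable[OF fY[OF q1(1)] fY[OF q1(2)] f_sq[OF q(1)] f_sq[OF q(2)]])
  show "AE \<omega> in M. real_cond_exp M (natF M X n) (\<lambda>\<omega>. f (noise_pair q \<omega>)) \<omega> = 0"
    by (rule f_centred)
qed (rule f noise_pair_cond_indep[OF q]; assumption)+

lemma integral_noise_observation_mult:
  fixes f :: "real \<times> real \<Rightarrow> real" and u v :: "'a \<Rightarrow> real"
  assumes q: "q \<ge> 1" "q' \<ge> 1" and f: "f \<in> borel_measurable borel"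
    and f_sq: "integrable M (\<lambda>\<omega>. (f (noise_pair q \<omega>))\<^sup>2)" "integrable M (\<lambda>\<omega>. (f (noise_pair q' \<omega>))\<^sup>2)"
    and uv: "u \<in> borel_measurable sigma_zeta" "v \<in> borel_measurable sigma_zeta"
    and uv_01: "\<And>\<omega>. u \<omega> \<in> {0,1}" "\<And>\<omega>. v \<omega> \<in> {0,1}"
  shows "integrable M (\<lambda>\<omega>. f (noise_pair q \<omega>) * u \<omega> * (f (noise_pair q' \<omega>) * v \<omega>))"
    and "(\<integral>\<omega>. f (noise_pair q \<omega>) * u \<omega> * (f (noise_pair q' \<omega>) * v \<omega>) \<partial>M)
      = (\<integral>\<omega>. f (noise_pair q \<omega>) * f (noise_pair q' \<omega>) \<partial>M) * (\<integral>\<omega>. u \<omega> * v \<omega> \<partial>M)"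
proof -
  have fY: "(\<lambda>\<omega>. f (noise_pair j \<omega>)) \<in> borel_measurable sigma_X" if "j \<ge> 1" for j
    using measurable_compose[OF noise_pair_measurable_sigma_X[OF that] f] .
  have fY_M: "(\<lambda>\<omega>. f (noise_pair j \<omega>)) \<in> borel_measurable M" if "j \<ge> 1" for j
    using measurable_from_subalg[OF subalgebra_sigma_X fY[OF that]] .
  have u_M: "u \<in> borel_measurable M" "v \<in> borel_measurable M"
    using measurable_from_subalg[OF subalgebra_sigma_zeta uv(1)] measurable_from_subalg[OF subalgebra_sigma_zeta uv(2)]
    by simp_all
  have ff_int: "integrable M (\<lambda>\<omega>. f (noise_pair q \<omega>) * f (noise_pair q' \<omega>))"
    by (rule integrable_mult_of_square_integrable[OF fY_M[OF q(1)] fY_M[OF q(2)] f_sq])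
  have uv_int: "integrable M (\<lambda>\<omega>. u \<omega> * v \<omega>)"
  proof (rule integrable_const_bound[where B=1])
    have "norm (u \<omega> * v \<omega>) \<le> 1" for \<omega> using uv_01(1)[of \<omega>] uv_01(2)[of \<omega>] by auto
    then show "AE \<omega> in M. norm (u \<omega> * v \<omega>) \<le> 1" by simp
  qed (use u_M in simp)
  have rearrange: "f (noise_pair q \<omega>) * u \<omega> * (f (noise_pair q' \<omega>) * v \<omega>)
      = (f (noise_pair q \<omega>) * f (noise_pair q' \<omega>)) * (u \<omega> * v \<omega>)" for \<omega>
    by (simp add: ac_simps)
  show "integrable M (\<lambda>\<omega>. f (noise_pair q \<omega>) * u \<omega> * (f (noise_pair q' \<omega>) * v \<omega>))"
  proof (rule Bochner_Integration.integrable_bound[OF ff_int])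
    show "(\<lambda>\<omega>. f (noise_pair q \<omega>) * u \<omega> * (f (noise_pair q' \<omega>) * v \<omega>)) \<in> borel_measurable M"
      using fY_M q u_M by simp
    have "norm (f (noise_pair q \<omega>) * u \<omega> * (f (noise_pair q' \<omega>) * v \<omega>))
        \<le> norm (f (noise_pair q \<omega>) * f (noise_pair q' \<omega>))" for \<omega>
      using uv_01(1)[of \<omega>] uv_01(2)[of \<omega>] by (auto simp: abs_mult)
    then show "AE \<omega> in M. norm (f (noise_pair q \<omega>) * u \<omega> * (f (noise_pair q' \<omega>) * v \<omega>))
        \<le> norm (f (noise_pair q \<omega>) * f (noise_pair q' \<omega>))" by simp
  qed
  show "(\<integral>\<omega>. f (noise_pair q \<omega>) * u \<omega> * (f (noise_pair q' \<omega>) * v \<omega>) \<partial>M)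
      = (\<integral>\<omega>. f (noise_pair q \<omega>) * f (noise_pair q' \<omega>) \<partial>M) * (\<integral>\<omega>. u \<omega> * v \<omega> \<partial>M)"
    unfolding rearrange
    by (rule integral_mult_process_observation[OF borel_measurable_times[OF fY[OF q(1)] fY[OF q(2)]]
          borel_measurable_times[OF uv] ff_int uv_int])
qed

text \<open>Cross terms vanish: the observation indicators factor out by (HI), and the remaining noise
  product is centred by (HN.2).\<close>

lemma integral_square_sum_noise:
  fixes f :: "real \<times> real \<Rightarrow> real" and cc :: "nat \<Rightarrow> 'a \<Rightarrow> real"
  assumes f: "f \<in> borel_measurable borel"
    and f_sq: "\<And>n q. q \<in> genG n \<Longrightarrow> integrable M (\<lambda>\<omega>. (f (noise_pair q \<omega>))\<^sup>2)"
    and f_centred: "\<And>n q. q \<in> genG n \<Longrightarrow>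
        AE \<omega> in M. real_cond_exp M (natF M X n) (\<lambda>\<omega>. f (noise_pair q \<omega>)) \<omega> = 0"
    and f_var: "\<And>n q. q \<in> genG n \<Longrightarrow> (\<integral>\<omega>. (f (noise_pair q \<omega>))\<^sup>2 \<partial>M) \<le> K"
    and cc: "\<And>q. q \<ge> 1 \<Longrightarrow> cc q \<in> borel_measurable sigma_zeta"
    and cc_01: "\<And>q \<omega>. q \<ge> 1 \<Longrightarrow> cc q \<omega> \<in> {0,1}"
  shows "integrable M (\<lambda>\<omega>. (\<Sum>q\<in>genG n. f (noise_pair q \<omega>) * cc q \<omega>)\<^sup>2)"
    and "(\<integral>\<omega>. (\<Sum>q\<in>genG n. f (noise_pair q \<omega>) * cc q \<omega>)\<^sup>2 \<partial>M) \<le> K * (\<Sum>q\<in>genG n. integral\<^sup>L M (cc q))"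
proof -
  define A where "A q \<omega> = f (noise_pair q \<omega>) * cc q \<omega>" for q \<omega>
  have A_int: "integrable M (\<lambda>\<omega>. A q \<omega> * A q' \<omega>)"
    and factor: "(\<integral>\<omega>. A q \<omega> * A q' \<omega> \<partial>M)
      = (\<integral>\<omega>. f (noise_pair q \<omega>) * f (noise_pair q' \<omega>) \<partial>M) * (\<integral>\<omega>. cc q \<omega> * cc q' \<omega> \<partial>M)"
    if "q \<in> genG n" "q' \<in> genG n" for q q'
  proof -
    have q1: "q \<ge> 1" "q' \<ge> 1" using that genG_ge1 by auto
    note mult = integral_noise_observation_mult[OF q1 f f_sq[OF that(1)] f_sq[OF that(2)]
        cc[OF q1(1)] cc[OF q1(2)] cc_01[OF q1(1)] cc_01[OF q1(2)]]
    show "integrable M (\<lambda>\<omega>. A q \<omega> * A q' \<omega>)" unfolding A_def by (rule mult(1))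
    show "(\<integral>\<omega>. A q \<omega> * A q' \<omega> \<partial>M)
      = (\<integral>\<omega>. f (noise_pair q \<omega>) * f (noise_pair q' \<omega>) \<partial>M) * (\<integral>\<omega>. cc q \<omega> * cc q' \<omega> \<partial>M)"
      unfolding A_def by (rule mult(2))
  qed
  have orthogonal: "(\<integral>\<omega>. A q \<omega> * A q' \<omega> \<partial>M) = 0" if "q \<in> genG n" "q' \<in> genG n" "q \<noteq> q'" for q q'
    using factor[OF that(1,2)] integral_noise_pair_orthogonal[OF that f f_sq f_centred[OF that(1)]] by simp
  note orthogonal_sum = integral_square_sum_orthogonal[OF genG_finite A_int orthogonal]
  show "integrable M (\<lambda>\<omega>. (\<Sum>q\<in>genG n. f (noise_pair q \<omega>) * cc q \<omega>)\<^sup>2)"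
    using orthogonal_sum(1) unfolding A_def .
  have diagonal: "(\<integral>\<omega>. (A q \<omega>)\<^sup>2 \<partial>M) \<le> K * integral\<^sup>L M (cc q)" if q: "q \<in> genG n" for q
  proof -
    have cc_q: "cc q \<omega> \<in> {0,1}" for \<omega> using cc_01 genG_ge1[OF q] by blast
    have cc_sq: "cc q \<omega> * cc q \<omega> = cc q \<omega>" for \<omega> using cc_q[of \<omega>] by auto
    have "cc q \<omega> \<ge> 0" for \<omega> using cc_q[of \<omega>] by auto
    then have "integral\<^sup>L M (cc q) \<ge> 0" by (intro integral_nonneg_AE AE_I2)
    then have "(\<integral>\<omega>. (f (noise_pair q \<omega>))\<^sup>2 \<partial>M) * integral\<^sup>L M (cc q) \<le> K * integral\<^sup>L M (cc q)"
      using f_var[OF q] by (rule mult_right_mono[rotated])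
    then show ?thesis using factor[OF q q] by (simp add: power2_eq_square cc_sq)
  qed
  have "(\<integral>\<omega>. (\<Sum>q\<in>genG n. A q \<omega>)\<^sup>2 \<partial>M) = (\<Sum>q\<in>genG n. \<integral>\<omega>. (A q \<omega>)\<^sup>2 \<partial>M)"
    by (rule orthogonal_sum(2))
  also have "\<dots> \<le> (\<Sum>q\<in>genG n. K * integral\<^sup>L M (cc q))" by (rule sum_mono[OF diagonal])
  also have "\<dots> = K * (\<Sum>q\<in>genG n. integral\<^sup>L M (cc q))" by (simp add: sum_distrib_left)
  finally show "(\<integral>\<omega>. (\<Sum>q\<in>genG n. f (noise_pair q \<omega>) * cc q \<omega>)\<^sup>2 \<partial>M) \<le> K * (\<Sum>q\<in>genG n. integral\<^sup>L M (cc q))"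
    unfolding A_def .
qed

lemma AE_LIMSEQ_noise_sum:
  fixes f :: "real \<times> real \<Rightarrow> real" and cc :: "nat \<Rightarrow> 'a \<Rightarrow> real"
  assumes f: "f \<in> borel_measurable borel"
    and f_sq: "\<And>n q. q \<in> genG n \<Longrightarrow> integrable M (\<lambda>\<omega>. (f (noise_pair q \<omega>))\<^sup>2)"
    and f_centred: "\<And>n q. q \<in> genG n \<Longrightarrow>
        AE \<omega> in M. real_cond_exp M (natF M X n) (\<lambda>\<omega>. f (noise_pair q \<omega>)) \<omega> = 0"
    and f_var: "\<And>n q. q \<in> genG n \<Longrightarrow> (\<integral>\<omega>. (f (noise_pair q \<omega>))\<^sup>2 \<partial>M) \<le> K"
    and cc: "\<And>q. q \<ge> 1 \<Longrightarrow> cc q \<in> borel_measurable sigma_zeta"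
    and cc_01: "\<And>q \<omega>. q \<ge> 1 \<Longrightarrow> cc q \<omega> \<in> {0,1}"
    and cc_le: "\<And>q \<omega>. q \<ge> 1 \<Longrightarrow> cc q \<omega> \<le> real (delta q \<omega>)"
  shows "AE \<omega> in M. (\<lambda>l. (\<Sum>q\<in>genG l. f (noise_pair q \<omega>) * cc q \<omega>) / pi^l) \<longlonglongrightarrow> 0"
proof -
  obtain C where C: "\<And>l. (\<Sum>k\<in>genG l. \<integral>\<omega>. real (delta k \<omega>) \<partial>M) \<le> C * pi ^ l"
    using expected_generation_size_bound by blast
  have "1 \<in> genG 0" by (simp add: genG_0)
  then have "(\<integral>\<omega>. (f (noise_pair 1 \<omega>))\<^sup>2 \<partial>M) \<le> K" by (rule f_var)
  moreover have "0 \<le> (\<integral>\<omega>. (f (noise_pair 1 \<omega>))\<^sup>2 \<partial>M)" by (rule integral_nonneg_AE) simp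
  ultimately have K: "K \<ge> 0" by linarith
  have L2: "integrable M (\<lambda>\<omega>. (\<Sum>q\<in>genG l. f (noise_pair q \<omega>) * cc q \<omega>)\<^sup>2)"
    "(\<integral>\<omega>. (\<Sum>q\<in>genG l. f (noise_pair q \<omega>) * cc q \<omega>)\<^sup>2 \<partial>M) \<le> K * (\<Sum>q\<in>genG l. integral\<^sup>L M (cc q))"
    for l
    by (rule integral_square_sum_noise; fact assms)+
  show ?thesis
  proof (rule AE_LIMSEQ_div_power_zero[OF _ L2(1) _ pi_gt1])
    fix l
    have q1: "q \<ge> 1" if "q \<in> genG l" for q using genG_ge1 that .
    show "(\<lambda>\<omega>. \<Sum>q\<in>genG l. f (noise_pair q \<omega>) * cc q \<omega>) \<in> borel_measurable M"
    proof (intro borel_measurable_sum borel_measurable_times)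
      fix q assume q: "q \<in> genG l"
      show "(\<lambda>\<omega>. f (noise_pair q \<omega>)) \<in> borel_measurable M"
        using measurable_compose[OF noise_pair_measurable[OF q1[OF q]] f] .
      show "cc q \<in> borel_measurable M"
        using measurable_from_subalg[OF subalgebra_sigma_zeta cc[OF q1[OF q]]] .
    qed
    have "(\<Sum>q\<in>genG l. integral\<^sup>L M (cc q)) \<le> (\<Sum>q\<in>genG l. \<integral>\<omega>. real (delta q \<omega>) \<partial>M)"
    proof (intro sum_mono integral_mono)
      fix q assume q: "q \<in> genG l"
      show "integrable M (cc q)"
      proof (rule integrable_const_bound[where B=1])
        have "norm (cc q \<omega>) \<le> 1" for \<omega> using cc_01[OF q1[OF q], of \<omega>] by auto
        then show "AE \<omega> in M. norm (cc q \<omega>) \<le> 1" by simp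
      qed (rule measurable_from_subalg[OF subalgebra_sigma_zeta cc[OF q1[OF q]]])
      show "integrable M (\<lambda>\<omega>. real (delta q \<omega>))" by (rule delta_integrable[OF q1[OF q]])
      show "cc q \<omega> \<le> real (delta q \<omega>)" for \<omega> by (rule cc_le[OF q1[OF q]])
    qed
    also have "\<dots> \<le> C * pi ^ l" by (rule C)
    finally have "K * (\<Sum>q\<in>genG l. integral\<^sup>L M (cc q)) \<le> K * (C * pi ^ l)"
      by (rule mult_left_mono[OF _ K])
    with L2(2)[of l]
    show "(\<integral>\<omega>. (\<Sum>q\<in>genG l. f (noise_pair q \<omega>) * cc q \<omega>)\<^sup>2 \<partial>M) \<le> K * C * pi ^ l"
      by (simp add: mult.assoc)
  qed
qed

definition centred_sq :: "nat \<Rightarrow> real \<times> real \<Rightarrow> real" where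
  "centred_sq i y = (if i = 0 then fst y else snd y)\<^sup>2 - sigma2"

definition centred_prod :: "real \<times> real \<Rightarrow> real" where
  "centred_prod y = fst y * snd y - rhop * sigma2"

lemma centred_sq_noise_pair: "i < 2 \<Longrightarrow> centred_sq i (noise_pair q \<omega>) = (eps (2*q+i) \<omega>)\<^sup>2 - sigma2"
  unfolding centred_sq_def noise_pair_def by (auto simp: less_2_cases_iff)

lemma centred_sq_measurable: "centred_sq i \<in> borel_measurable borel"
  unfolding centred_sq_def
  by (rule borel_measurable_continuous_onI) (cases "i = 0"; auto intro!: continuous_intros)

lemma centred_prod_measurable: "centred_prod \<in> borel_measurable borel"
  unfolding centred_prod_def by (rule borel_measurable_continuous_onI) (auto intro!: continuous_intros)

lemma centred_sq_moments:
  assumes q: "q \<in> genG n" and i: "i < 2"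
  shows "integrable M (\<lambda>\<omega>. (centred_sq i (noise_pair q \<omega>))\<^sup>2)"
    and "AE \<omega> in M. real_cond_exp M (natF M X n) (\<lambda>\<omega>. centred_sq i (noise_pair q \<omega>)) \<omega> = 0"
    and "(\<integral>\<omega>. (centred_sq i (noise_pair q \<omega>))\<^sup>2 \<partial>M) \<le> tau4"
proof -
  interpret F: sigma_finite_subalgebra M "natF M X n" by (rule sigma_finite_subalgebra_natF)
  define k where "k = 2*q+i"
  have k: "k \<in> genG (Suc n)" unfolding k_def using daughter_in_genG[OF q i] .
  note m = eps_moments[OF k]
  have sq: "(centred_sq i (noise_pair q \<omega>))\<^sup>2 = (eps k \<omega>)^4 - 2 * sigma2 * (eps k \<omega>)\<^sup>2 + sigma2\<^sup>2" for \<omega>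
    unfolding k_def centred_sq_noise_pair[OF i] by (simp add: power2_eq_square power4_eq_xxxx algebra_simps)
  show "integrable M (\<lambda>\<omega>. (centred_sq i (noise_pair q \<omega>))\<^sup>2)" unfolding sq using m(1,2) by simp
  have "(\<integral>\<omega>. (centred_sq i (noise_pair q \<omega>))\<^sup>2 \<partial>M) = tau4 - sigma2\<^sup>2"
    unfolding sq using m by (simp add: prob_space power2_eq_square)
  then show "(\<integral>\<omega>. (centred_sq i (noise_pair q \<omega>))\<^sup>2 \<partial>M) \<le> tau4" by simp
  have "AE \<omega> in M. real_cond_exp M (natF M X n) (\<lambda>\<omega>. (eps k \<omega>)\<^sup>2 - sigma2) \<omega>
      = real_cond_exp M (natF M X n) (\<lambda>\<omega>. (eps k \<omega>)\<^sup>2) \<omega> - real_cond_exp M (natF M X n) (\<lambda>_. sigma2) \<omega>"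
    by (rule F.real_cond_exp_diff) (use m in auto)
  then have "AE \<omega> in M. real_cond_exp M (natF M X n) (\<lambda>\<omega>. (eps k \<omega>)\<^sup>2 - sigma2) \<omega> = 0"
    using ce2[OF k] real_cond_exp_natF_const[of n sigma2] by eventually_elim simp
  moreover have "(\<lambda>\<omega>. centred_sq i (noise_pair q \<omega>)) = (\<lambda>\<omega>. (eps k \<omega>)\<^sup>2 - sigma2)"
    unfolding k_def centred_sq_noise_pair[OF i] ..
  ultimately show "AE \<omega> in M. real_cond_exp M (natF M X n) (\<lambda>\<omega>. centred_sq i (noise_pair q \<omega>)) \<omega> = 0"
    by simp
qed

lemma centred_prod_moments:
  assumes q: "q \<in> genG n"
  shows "integrable M (\<lambda>\<omega>. (centred_prod (noise_pair q \<omega>))\<^sup>2)"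
    and "AE \<omega> in M. real_cond_exp M (natF M X n) (\<lambda>\<omega>. centred_prod (noise_pair q \<omega>)) \<omega> = 0"
    and "(\<integral>\<omega>. (centred_prod (noise_pair q \<omega>))\<^sup>2 \<partial>M) \<le> 2 * tau4 + 2 * (rhop * sigma2)\<^sup>2"
proof -
  interpret F: sigma_finite_subalgebra M "natF M X n" by (rule sigma_finite_subalgebra_natF)
  define r where "r = rhop * sigma2"
  have k0: "2*q \<in> genG (Suc n)" and k1: "2*q+1 \<in> genG (Suc n)"
    using daughter_in_genG[OF q, of 0] daughter_in_genG[OF q, of 1] by simp_all
  note m0 = eps_moments[OF k0] and m1 = eps_moments[OF k1]
  have e0: "eps (2*q) \<in> borel_measurable M" and e1: "eps (2*q+1) \<in> borel_measurable M"
    using eps_measurable genG_Suc_ge2[OF k0] genG_Suc_ge2[OF k1] by auto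
  have i11: "integrable M (\<lambda>\<omega>. eps (2*q) \<omega> * eps (2*q+1) \<omega>)"
    by (rule integrable_mult_of_square_integrable[OF e0 e1 m0(2) m1(2)])
  have i22: "integrable M (\<lambda>\<omega>. (eps (2*q) \<omega>)\<^sup>2 * (eps (2*q+1) \<omega>)\<^sup>2)"
    using m0(1) m1(1) e0 e1
    by (intro integrable_mult_of_square_integrable) (simp_all add: power_mult[symmetric])
  have sq: "(centred_prod (noise_pair q \<omega>))\<^sup>2
      = (eps (2*q) \<omega>)\<^sup>2 * (eps (2*q+1) \<omega>)\<^sup>2 - 2 * r * (eps (2*q) \<omega> * eps (2*q+1) \<omega>) + r\<^sup>2" for \<omega>
    unfolding centred_prod_def noise_pair_def r_def by (simp add: power2_eq_square algebra_simps)
  show int: "integrable M (\<lambda>\<omega>. (centred_prod (noise_pair q \<omega>))\<^sup>2)" unfolding sq using i11 i22 by simp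
  have "(centred_prod (noise_pair q \<omega>))\<^sup>2 \<le> (eps (2*q) \<omega>)^4 + (eps (2*q+1) \<omega>)^4 + 2 * r\<^sup>2" for \<omega>
    unfolding centred_prod_def noise_pair_def r_def by (simp add: square_product_minus_le)
  then have "(\<integral>\<omega>. (centred_prod (noise_pair q \<omega>))\<^sup>2 \<partial>M)
      \<le> (\<integral>\<omega>. (eps (2*q) \<omega>)^4 + (eps (2*q+1) \<omega>)^4 + 2 * r\<^sup>2 \<partial>M)"
    using int m0(1) m1(1) by (intro integral_mono) auto
  then show "(\<integral>\<omega>. (centred_prod (noise_pair q \<omega>))\<^sup>2 \<partial>M) \<le> 2 * tau4 + 2 * (rhop * sigma2)\<^sup>2"
    using m0 m1 unfolding r_def by (simp add: prob_space)
  have "AE \<omega> in M. real_cond_exp M (natF M X n) (\<lambda>\<omega>. eps (2*q) \<omega> * eps (2*q+1) \<omega> - r) \<omega>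
      = real_cond_exp M (natF M X n) (\<lambda>\<omega>. eps (2*q) \<omega> * eps (2*q+1) \<omega>) \<omega>
        - real_cond_exp M (natF M X n) (\<lambda>_. r) \<omega>"
    by (rule F.real_cond_exp_diff) (use i11 in auto)
  then have "AE \<omega> in M. real_cond_exp M (natF M X n) (\<lambda>\<omega>. eps (2*q) \<omega> * eps (2*q+1) \<omega> - r) \<omega> = 0"
    using cc1[OF q] real_cond_exp_natF_const[of n r] unfolding r_def by eventually_elim simp
  moreover have "(\<lambda>\<omega>. centred_prod (noise_pair q \<omega>)) = (\<lambda>\<omega>. eps (2*q) \<omega> * eps (2*q+1) \<omega> - r)"
    unfolding centred_prod_def noise_pair_def r_def by simp
  ultimately show "AE \<omega> in M. real_cond_exp M (natF M X n) (\<lambda>\<omega>. centred_prod (noise_pair q \<omega>)) \<omega> = 0"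
    by simp
qed

lemma AE_LIMSEQ_noise_sq_fluctuation:
  assumes i: "i < 2" and j: "j < 2"
  shows "AE \<omega> in M. (\<lambda>l. (\<Sum>q\<in>genG l.
            centred_sq i (noise_pair q \<omega>) * real (delta (2*(2*q+i)+j) \<omega>)) / pi^l) \<longlonglongrightarrow> 0"
proof (rule AE_LIMSEQ_noise_sum[where f="centred_sq i" and cc="\<lambda>q \<omega>. real (delta (2*(2*q+i)+j) \<omega>)"])
  show "integrable M (\<lambda>\<omega>. (centred_sq i (noise_pair q \<omega>))\<^sup>2)"
    and "AE \<omega> in M. real_cond_exp M (natF M X n) (\<lambda>\<omega>. centred_sq i (noise_pair q \<omega>)) \<omega> = 0"
    and "(\<integral>\<omega>. (centred_sq i (noise_pair q \<omega>))\<^sup>2 \<partial>M) \<le> tau4" if "q \<in> genG n" for n q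
    using centred_sq_moments[OF that i] by auto
  fix q :: nat and \<omega> assume q: "q \<ge> 1"
  show "(\<lambda>\<omega>. real (delta (2*(2*q+i)+j) \<omega>)) \<in> borel_measurable sigma_zeta"
    by (rule delta_measurable_sigma_zeta) (use q in simp)
  show "real (delta (2*(2*q+i)+j) \<omega>) \<in> {0,1}" using delta_01[of "2*(2*q+i)+j" \<omega>] q by auto
  have "delta (2*(2*q+i)+j) \<omega> \<le> delta (2*q+i) \<omega>" "delta (2*q+i) \<omega> \<le> delta q \<omega>"
    using delta_daughter_le[of "2*q+i" j \<omega>] delta_daughter_le[OF q i, of \<omega>] j q by simp_all
  then show "real (delta (2*(2*q+i)+j) \<omega>) \<le> real (delta q \<omega>)" by simp
qed (rule centred_sq_measurable)

lemma AE_LIMSEQ_noise_prod_fluctuation: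
  "AE \<omega> in M. (\<lambda>l. (\<Sum>q\<in>genG l.
      centred_prod (noise_pair q \<omega>) * real (delta (2*q) \<omega> * delta (2*q+1) \<omega>)) / pi^l) \<longlonglongrightarrow> 0"
proof (rule AE_LIMSEQ_noise_sum[where f=centred_prod and cc="\<lambda>q \<omega>. real (delta (2*q) \<omega> * delta (2*q+1) \<omega>)"])
  show "integrable M (\<lambda>\<omega>. (centred_prod (noise_pair q \<omega>))\<^sup>2)"
    and "AE \<omega> in M. real_cond_exp M (natF M X n) (\<lambda>\<omega>. centred_prod (noise_pair q \<omega>)) \<omega> = 0"
    and "(\<integral>\<omega>. (centred_prod (noise_pair q \<omega>))\<^sup>2 \<partial>M) \<le> 2 * tau4 + 2 * (rhop * sigma2)\<^sup>2"
    if "q \<in> genG n" for n q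
    using centred_prod_moments[OF that] by auto
  fix q :: nat and \<omega> assume q: "q \<ge> 1"
  show "(\<lambda>\<omega>. real (delta (2*q) \<omega> * delta (2*q+1) \<omega>)) \<in> borel_measurable sigma_zeta"
    using delta_measurable_sigma_zeta[of "2*q"] delta_measurable_sigma_zeta[of "2*q+1"] q by simp
  show "real (delta (2*q) \<omega> * delta (2*q+1) \<omega>) \<in> {0,1}"
    using delta_01[of "2*q" \<omega>] delta_01[of "2*q+1" \<omega>] q by auto
  show "real (delta (2*q) \<omega> * delta (2*q+1) \<omega>) \<le> real (delta q \<omega>)"
    using delta_daughter_le[OF q, of 0 \<omega>] delta_01[of "2*q+1" \<omega>] q by auto
qed (rule centred_prod_measurable)

lemma AE_LIMSEQ_observation_fluctuation:
  assumes i: "i < 2" and j: "j < 2"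
  shows "AE \<omega> in M. (\<lambda>l. (\<Sum>k\<in>{k \<in> genG l. k mod 2 = i}.
            real (delta k \<omega>) * (real (coord j (zeta k \<omega>)) - Pmat p i j)) / pi^l) \<longlonglongrightarrow> 0"
proof (rule AE_LIMSEQ_centred_zeta_sum[where h="\<lambda>k v. real (coord j v) - Pmat p i j"
      and H="1 + \<bar>Pmat p i j\<bar>"])
  fix l k v
  show "{k \<in> genG l. k mod 2 = i} \<subseteq> genG l" by auto
  show "\<bar>real (coord j v) - Pmat p i j\<bar> \<le> 1 + \<bar>Pmat p i j\<bar>" if "v \<in> {0,1}\<times>{0,1}"
    using that by (auto simp: coord_def)
  assume k: "k \<in> {k \<in> genG l. k mod 2 = i}"
  then have k1: "k \<ge> 1" using genG_ge1 by auto
  show "(\<integral>\<omega>. real (coord j (zeta k \<omega>)) - Pmat p i j \<partial>M) = 0"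
    using zeta_integral(1)[OF k1, of "\<lambda>v. real (coord j v)"] integral_coord_zeta[OF k1 j] k
    by (simp add: prob_space)
qed

lemma AE_LIMSEQ_observation_prod_fluctuation:
  "AE \<omega> in M. (\<lambda>l. (\<Sum>k\<in>genG l.
      real (delta k \<omega>) * (real (fst (zeta k \<omega>) * snd (zeta k \<omega>)) - p (k mod 2) 1 1)) / pi^l) \<longlonglongrightarrow> 0"
proof (rule AE_LIMSEQ_centred_zeta_sum[where h="\<lambda>k v. real (fst v * snd v) - p (k mod 2) 1 1"
      and H="1 + \<bar>p 0 1 1\<bar> + \<bar>p 1 1 1\<bar>"])
  fix l k v
  show "genG l \<subseteq> genG l" ..
  show "\<bar>real (fst v * snd v) - p (k mod 2) 1 1\<bar> \<le> 1 + \<bar>p 0 1 1\<bar> + \<bar>p 1 1 1\<bar>" if "v \<in> {0,1}\<times>{0,1}"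
    using that by (cases "k mod 2 = 0") (auto simp: mod2_eq_if split: if_splits)
  assume "k \<in> genG l"
  then have k1: "k \<ge> 1" using genG_ge1 by auto
  show "(\<integral>\<omega>. real (fst (zeta k \<omega>) * snd (zeta k \<omega>)) - p (k mod 2) 1 1 \<partial>M) = 0"
    using zeta_integral(1)[OF k1, of "\<lambda>v. real (fst v * snd v)"] integral_both_coords_zeta[OF k1]
    by (simp add: prob_space)
qed

lemma sum_delta_type_eq_card:
  "(\<Sum>k\<in>{k \<in> genG l. k mod 2 = i}. real (delta k \<omega>)) = real (card {k \<in> genG l. k mod 2 = i \<and> delta k \<omega> = 1})"
  using genG_ge1 by (subst sum_delta_eq_card) (auto intro!: arg_cong[where f="\<lambda>S. real (card S)"])

lemma sum_eps_sq_decomposition: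
  assumes i: "i < 2" and j: "j < 2"
  shows "(\<Sum>k\<in>{k \<in> genG (Suc l). k mod 2 = i}. (eps k \<omega>)\<^sup>2 * real (delta (2*k+j) \<omega>))
    = (\<Sum>q\<in>genG l. centred_sq i (noise_pair q \<omega>) * real (delta (2*(2*q+i)+j) \<omega>))
      + sigma2 * ((\<Sum>k\<in>{k \<in> genG (Suc l). k mod 2 = i}.
                    real (delta k \<omega>) * (real (coord j (zeta k \<omega>)) - Pmat p i j))
                  + Pmat p i j * real (card {k \<in> genG (Suc l). k mod 2 = i \<and> delta k \<omega> = 1}))"
proof -
  let ?G = "{k \<in> genG (Suc l). k mod 2 = i}"
  have "(\<Sum>k\<in>?G. (eps k \<omega>)\<^sup>2 * real (delta (2*k+j) \<omega>))
      = (\<Sum>q\<in>genG l. centred_sq i (noise_pair q \<omega>) * real (delta (2*(2*q+i)+j) \<omega>))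
        + sigma2 * (\<Sum>k\<in>?G. real (delta (2*k+j) \<omega>))"
    unfolding sum_genG_Suc_type[OF i] sum_distrib_left sum.distrib[symmetric]
    by (intro sum.cong refl) (simp add: centred_sq_noise_pair[OF i] algebra_simps)
  moreover have "(\<Sum>k\<in>?G. real (delta (2*k+j) \<omega>))
      = (\<Sum>k\<in>?G. real (delta k \<omega>) * (real (coord j (zeta k \<omega>)) - Pmat p i j)) + Pmat p i j * (\<Sum>k\<in>?G. real (delta k \<omega>))"
    unfolding sum_distrib_left sum.distrib[symmetric]
  proof (rule sum.cong[OF refl])
    fix k assume "k \<in> ?G"
    then have "k \<ge> 1" using genG_ge1 by blast
    then show "real (delta (2*k+j) \<omega>)
        = real (delta k \<omega>) * (real (coord j (zeta k \<omega>)) - Pmat p i j) + Pmat p i j * real (delta k \<omega>)"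
      using delta_daughter[of k j \<omega>] j by (simp add: algebra_simps)
  qed
  ultimately show ?thesis by (simp add: sum_delta_type_eq_card)
qed

lemma sum_eps_prod_decomposition:
  "(\<Sum>k\<in>genG l. real (delta (2*k) \<omega> * delta (2*k+1) \<omega>) * eps (2*k) \<omega> * eps (2*k+1) \<omega>)
    = (\<Sum>q\<in>genG l. centred_prod (noise_pair q \<omega>) * real (delta (2*q) \<omega> * delta (2*q+1) \<omega>))
      + rhop * sigma2 * ((\<Sum>k\<in>genG l. real (delta k \<omega>) * (real (fst (zeta k \<omega>) * snd (zeta k \<omega>)) - p (k mod 2) 1 1))
        + (p 0 1 1 * real (card {k \<in> genG l. k mod 2 = 0 \<and> delta k \<omega> = 1})
           + p 1 1 1 * real (card {k \<in> genG l. k mod 2 = 1 \<and> delta k \<omega> = 1})))"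
proof -
  have both: "real (delta (2*k) \<omega> * delta (2*k+1) \<omega>)
      = real (delta k \<omega>) * (real (fst (zeta k \<omega>) * snd (zeta k \<omega>)) - p (k mod 2) 1 1)
        + p (k mod 2) 1 1 * real (delta k \<omega>)" if "k \<in> genG l" for k
  proof -
    have k1: "k \<ge> 1" using genG_ge1 that .
    have "delta k \<omega> * delta k \<omega> = delta k \<omega>" using delta_01[OF k1, of \<omega>] by auto
    then have "delta (2*k) \<omega> * delta (2*k+1) \<omega> = delta k \<omega> * (fst (zeta k \<omega>) * snd (zeta k \<omega>))"
      using delta0[OF k1, of \<omega>] delta_1[OF k1, of \<omega>] by (metis mult.assoc mult.left_commute)
    then show ?thesis by (simp add: algebra_simps)
  qed
  let ?c = "\<lambda>k. real (delta (2*k) \<omega> * delta (2*k+1) \<omega>)"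
  have "(\<Sum>k\<in>genG l. ?c k * eps (2*k) \<omega> * eps (2*k+1) \<omega>)
      = (\<Sum>k\<in>genG l. centred_prod (noise_pair k \<omega>) * ?c k + rhop * sigma2 * ?c k)"
    by (intro sum.cong refl) (simp add: centred_prod_def noise_pair_def algebra_simps)
  also have "\<dots> = (\<Sum>k\<in>genG l. centred_prod (noise_pair k \<omega>) * ?c k)
      + rhop * sigma2 * (\<Sum>k\<in>genG l. ?c k)"
    by (simp add: sum.distrib sum_distrib_left)
  also have "(\<Sum>k\<in>genG l. ?c k)
      = (\<Sum>k\<in>genG l. real (delta k \<omega>) * (real (fst (zeta k \<omega>) * snd (zeta k \<omega>)) - p (k mod 2) 1 1))
        + (\<Sum>k\<in>genG l. p (k mod 2) 1 1 * real (delta k \<omega>))"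
    unfolding sum.distrib[symmetric] by (rule sum.cong[OF refl both])
  also have "(\<Sum>k\<in>genG l. p (k mod 2) 1 1 * real (delta k \<omega>))
      = p 0 1 1 * (\<Sum>k\<in>{k \<in> genG l. k mod 2 = 0}. real (delta k \<omega>))
        + p 1 1 1 * (\<Sum>k\<in>{k \<in> genG l. k mod 2 = 1}. real (delta k \<omega>))"
    by (subst sum_split_parity) (simp_all add: sum_distrib_left)
  finally show ?thesis by (simp only: sum_delta_type_eq_card)
qed

lemma AE_LIMSEQ_sum_eps_sq:
  assumes i: "i < 2" and j: "j < 2"
  shows "AE \<omega> in M.
    (\<lambda>n. (\<Sum>k \<in> {k \<in> treeT n. k mod 2 = i} - treeT 0. (eps k \<omega>)\<^sup>2 * real (delta (2*k+j) \<omega>)) / pi ^ n)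
      \<longlonglongrightarrow> sigma2 * Pmat p i j * (pi / (pi - 1)) * W \<omega> * z i"
  using AE_LIMSEQ_noise_sq_fluctuation[OF i j] AE_LIMSEQ_observation_fluctuation[OF i j] W_lim
proof eventually_elim
  case (elim \<omega>)
  define x where "x l = (\<Sum>k\<in>{k \<in> genG l. k mod 2 = i}. (eps k \<omega>)\<^sup>2 * real (delta (2*k+j) \<omega>))" for l
  define U where "U l = (\<Sum>q\<in>genG l. centred_sq i (noise_pair q \<omega>) * real (delta (2*(2*q+i)+j) \<omega>))" for l
  define D where "D l = (\<Sum>k\<in>{k \<in> genG l. k mod 2 = i}.
      real (delta k \<omega>) * (real (coord j (zeta k \<omega>)) - Pmat p i j))" for l
  define N where "N l = real (card {k \<in> genG l. k mod 2 = i \<and> delta k \<omega> = 1})" for l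
  have N: "(\<lambda>l. N l / pi^l) \<longlonglongrightarrow> W \<omega> * z i" using elim(3) i unfolding N_def by (auto simp: less_2_cases_iff)
  have "x (Suc l) / pi^(Suc l)
      = (U l / pi^l) / pi + sigma2 * (D (Suc l) / pi^(Suc l) + Pmat p i j * (N (Suc l) / pi^(Suc l)))" for l
    using pi_gt1 unfolding x_def U_def D_def N_def sum_eps_sq_decomposition[OF i j] by (simp add: field_simps)
  moreover have "(\<lambda>l. (U l / pi^l) / pi + sigma2 * (D (Suc l) / pi^(Suc l) + Pmat p i j * (N (Suc l) / pi^(Suc l))))
      \<longlonglongrightarrow> 0 / pi + sigma2 * (0 + Pmat p i j * (W \<omega> * z i))"
  proof -
    have "(\<lambda>l. D (Suc l) / pi^(Suc l)) \<longlonglongrightarrow> 0" using LIMSEQ_Suc[OF elim(2)] unfolding D_def .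
    moreover have "(\<lambda>l. N (Suc l) / pi^(Suc l)) \<longlonglongrightarrow> W \<omega> * z i" using LIMSEQ_Suc[OF N] .
    moreover have "(\<lambda>l. U l / pi^l) \<longlonglongrightarrow> 0" using elim(1) unfolding U_def .
    ultimately show ?thesis using pi_gt1 by (intro tendsto_intros) auto
  qed
  ultimately have "(\<lambda>l. x (Suc l) / pi^(Suc l)) \<longlonglongrightarrow> sigma2 * Pmat p i j * W \<omega> * z i"
    by (simp add: ac_simps)
  then have "(\<lambda>n. (\<Sum>l\<in>{1..n}. x l) / pi^n) \<longlonglongrightarrow> sigma2 * Pmat p i j * W \<omega> * z i * (pi / (pi - 1))"
    by (intro LIMSEQ_partial_sums_div_power pi_gt1 LIMSEQ_imp_Suc[where f="\<lambda>l. x l / pi^l"])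
  then show ?case unfolding sum_treeT_minus_root x_def by (simp add: ac_simps)
qed

lemma AE_LIMSEQ_sum_eps_prod:
  "AE \<omega> in M.
    (\<lambda>n. (\<Sum>k \<in> treeT n - treeT 0.
              real (delta (2*k) \<omega> * delta (2*k+1) \<omega>) * eps (2*k) \<omega> * eps (2*k+1) \<omega>) / pi ^ n)
      \<longlonglongrightarrow> (rhop * sigma2) * (p 0 1 1 * z 0 + p 1 1 1 * z 1) * (pi / (pi - 1)) * W \<omega>"
  using AE_LIMSEQ_noise_prod_fluctuation AE_LIMSEQ_observation_prod_fluctuation W_lim
proof eventually_elim
  case (elim \<omega>)
  define y where "y l = (\<Sum>k\<in>genG l. real (delta (2*k) \<omega> * delta (2*k+1) \<omega>) * eps (2*k) \<omega> * eps (2*k+1) \<omega>)" for l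
  define U where "U l = (\<Sum>q\<in>genG l. centred_prod (noise_pair q \<omega>) * real (delta (2*q) \<omega> * delta (2*q+1) \<omega>))" for l
  define D where "D l = (\<Sum>k\<in>genG l. real (delta k \<omega>) * (real (fst (zeta k \<omega>) * snd (zeta k \<omega>)) - p (k mod 2) 1 1))" for l
  define N where "N l i = real (card {k \<in> genG l. k mod 2 = i \<and> delta k \<omega> = 1})" for l i
  have N: "(\<lambda>l. N l 0 / pi^l) \<longlonglongrightarrow> W \<omega> * z 0" "(\<lambda>l. N l 1 / pi^l) \<longlonglongrightarrow> W \<omega> * z 1"
    using elim(3) unfolding N_def by auto
  have "y l / pi^l = U l / pi^l + rhop * sigma2 * (D l / pi^l + (p 0 1 1 * (N l 0 / pi^l) + p 1 1 1 * (N l 1 / pi^l)))" for l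
    using pi_gt1 unfolding y_def U_def D_def N_def sum_eps_prod_decomposition by (simp add: field_simps)
  moreover have "(\<lambda>l. U l / pi^l + rhop * sigma2 * (D l / pi^l + (p 0 1 1 * (N l 0 / pi^l) + p 1 1 1 * (N l 1 / pi^l))))
      \<longlonglongrightarrow> 0 + rhop * sigma2 * (0 + (p 0 1 1 * (W \<omega> * z 0) + p 1 1 1 * (W \<omega> * z 1)))"
  proof -
    have "(\<lambda>l. U l / pi^l) \<longlonglongrightarrow> 0" "(\<lambda>l. D l / pi^l) \<longlonglongrightarrow> 0"
      using elim(1,2) unfolding U_def D_def .
    then show ?thesis using N by (intro tendsto_intros)
  qed
  ultimately have "(\<lambda>l. y l / pi^l) \<longlonglongrightarrow> (rhop * sigma2) * (p 0 1 1 * z 0 + p 1 1 1 * z 1) * W \<omega>"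
    by (simp add: algebra_simps)
  from LIMSEQ_partial_sums_div_power[OF pi_gt1 this]
  have "(\<lambda>n. (\<Sum>l\<in>{1..n}. y l) / pi ^ n)
      \<longlonglongrightarrow> (rhop * sigma2) * (p 0 1 1 * z 0 + p 1 1 1 * z 1) * W \<omega> * (pi / (pi - 1))" .
  moreover have "(\<Sum>k \<in> treeT n - treeT 0.
      real (delta (2*k) \<omega> * delta (2*k+1) \<omega>) * eps (2*k) \<omega> * eps (2*k+1) \<omega>) = (\<Sum>l\<in>{1..n}. y l)" for n
    using sum_treeT_minus_root[where n=n and P="\<lambda>_. True"] unfolding y_def by simp
  ultimately show ?case by (simp add: ac_simps)
qed

end

theorem corollary5p6:
  fixes M :: "'a measure"
    and X eps :: "nat \<Rightarrow> 'a \<Rightarrow> real"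
    and zeta :: "nat \<Rightarrow> 'a \<Rightarrow> nat \<times> nat"
    and delta :: "nat \<Rightarrow> 'a \<Rightarrow> nat"
    and a b c d sigma2 tau4 kappa8 rhop nu2 lam4 pi :: real
    and p :: "nat \<Rightarrow> nat \<Rightarrow> nat \<Rightarrow> real"
    and z :: "nat \<Rightarrow> real"
    and W :: "'a \<Rightarrow> real"
  assumes prob: "prob_space M"
    \<comment> \<open>BAR process\<close>
    and X_meas: "\<And>k. k \<ge> 1 \<Longrightarrow> X k \<in> borel_measurable M"
    and X1_L8: "integrable M (\<lambda>\<omega>. (X 1 \<omega>) ^ 8)"
    and BAR0: "\<And>k \<omega>. k \<ge> 1 \<Longrightarrow> X (2*k) \<omega> = a + b * X k \<omega> + eps (2*k) \<omega>"
    and BAR1: "\<And>k \<omega>. k \<ge> 1 \<Longrightarrow> X (2*k+1) \<omega> = c + d * X k \<omega> + eps (2*k+1) \<omega>"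
    and bd: "0 < max \<bar>b\<bar> \<bar>d\<bar>" "max \<bar>b\<bar> \<bar>d\<bar> < 1"
    \<comment> \<open>(HN.1)\<close>
    and eps_meas: "\<And>n k. k \<in> genG (Suc n) \<Longrightarrow> eps k \<in> borel_measurable M"
    and eps_L8: "\<And>n k. k \<in> genG (Suc n) \<Longrightarrow> integrable M (\<lambda>\<omega>. (eps k \<omega>) ^ 8)"
    and par_pos: "0 < sigma2" "0 < tau4" "0 < kappa8"
    and par_corr: "\<bar>rhop\<bar> < 1" "0 \<le> nu2" "nu2 < 1" "0 \<le> lam4" "lam4 < 1"
    and ce1: "\<And>n k. k \<in> genG (Suc n) \<Longrightarrow>
               AE \<omega> in M. real_cond_exp M (natF M X n) (eps k) \<omega> = 0"
    and ce2: "\<And>n k. k \<in> genG (Suc n) \<Longrightarrow>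
               AE \<omega> in M. real_cond_exp M (natF M X n) (\<lambda>x. (eps k x)^2) \<omega> = sigma2"
    and ce4: "\<And>n k. k \<in> genG (Suc n) \<Longrightarrow>
               AE \<omega> in M. real_cond_exp M (natF M X n) (\<lambda>x. (eps k x)^4) \<omega> = tau4"
    and ce8: "\<And>n k. k \<in> genG (Suc n) \<Longrightarrow>
               AE \<omega> in M. real_cond_exp M (natF M X n) (\<lambda>x. (eps k x)^8) \<omega> = kappa8"
    and cc1: "\<And>n k. k \<in> genG n \<Longrightarrow>
               AE \<omega> in M. real_cond_exp M (natF M X n) (\<lambda>x. eps (2*k) x * eps (2*k+1) x) \<omega>
                             = rhop * sigma2"
    and cc2: "\<And>n k. k \<in> genG n \<Longrightarrow>
               AE \<omega> in M. real_cond_exp M (natF M X n)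
                             (\<lambda>x. (eps (2*k) x)^2 * (eps (2*k+1) x)^2) \<omega> = nu2 * tau4"
    and cc4: "\<And>n k. k \<in> genG n \<Longrightarrow>
               AE \<omega> in M. real_cond_exp M (natF M X n)
                             (\<lambda>x. (eps (2*k) x)^4 * (eps (2*k+1) x)^4) \<omega> = lam4 * kappa8"
    \<comment> \<open>(HN.2)\<close>
    and HN2: "\<And>n. cond_indep_given M (natF M X n)
                    (\<lambda>k x. (eps (2*k) x, eps (2*k+1) x)) (genG n)"
    \<comment> \<open>observation process\<close>
    and zeta_val: "\<And>k \<omega>. k \<ge> 1 \<Longrightarrow> zeta k \<omega> \<in> {0,1} \<times> {0,1}"
    and zeta_indep: "prob_space.indep_vars M (\<lambda>_. count_space UNIV) zeta {1..}"
    and zeta_law: "\<And>k j0 j1. k \<ge> 1 \<Longrightarrow> j0 \<in> {0,1} \<Longrightarrow> j1 \<in> {0,1} \<Longrightarrow>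
                    measure M {\<omega> \<in> space M. zeta k \<omega> = (j0, j1)} = p (k mod 2) j0 j1"
    and delta1: "\<And>\<omega>. delta 1 \<omega> = 1"
    and delta0: "\<And>k \<omega>. k \<ge> 1 \<Longrightarrow> delta (2*k) \<omega> = delta k \<omega> * fst (zeta k \<omega>)"
    and delta_1: "\<And>k \<omega>. k \<ge> 1 \<Longrightarrow> delta (2*k+1) \<omega> = delta k \<omega> * snd (zeta k \<omega>)"
    \<comment> \<open>(HO)\<close>
    and P_pos: "\<And>i j. i \<in> {0,1} \<Longrightarrow> j \<in> {0,1} \<Longrightarrow> Pmat p i j > 0"
    and pi_gt1: "pi > 1"
    and pi_spec: "\<And>mu::complex. (of_real (Pmat p 0 0) - mu) * (of_real (Pmat p 1 1) - mu)
                    - of_real (Pmat p 0 1 * Pmat p 1 0) = 0 \<Longrightarrow> cmod mu \<le> pi"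
    and z_pos: "z 0 > 0" "z 1 > 0" "z 0 + z 1 = 1"
    and z_eig: "\<And>j. j \<in> {0,1} \<Longrightarrow> z 0 * Pmat p 0 j + z 1 * Pmat p 1 j = pi * z j"
    \<comment> \<open>(HI)\<close>
    and HI: "prob_space.indep_set M
               (sets (sigma (space M) {zeta k -` A \<inter> space M | k A. k \<ge> 1}))
               (sets (sigma (space M) {X k -` A \<inter> space M | k A. k \<ge> 1 \<and> A \<in> sets borel}))"
    \<comment> \<open>the limit W\<close>
    and W_meas: "W \<in> borel_measurable M"
    and W_nonneg: "\<And>\<omega>. W \<omega> \<ge> 0"
    and W_lim: "AE \<omega> in M. \<forall>i\<in>{0,1}.
                  (\<lambda>n. real (card {k \<in> genG n. k mod 2 = i \<and> delta k \<omega> = 1}) / pi ^ n)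
                    \<longlonglongrightarrow> W \<omega> * z i"
  shows "(\<forall>i\<in>{0,1}. \<forall>j\<in>{0,1}. AE \<omega> in M.
            (\<lambda>n. (\<Sum>k \<in> {k \<in> treeT n. k mod 2 = i} - treeT 0.
                      (eps k \<omega>)^2 * real (delta (2*k+j) \<omega>)) / pi ^ n)
              \<longlonglongrightarrow> sigma2 * Pmat p i j * (pi / (pi - 1)) * W \<omega> * z i)
       \<and> (AE \<omega> in M.
            (\<lambda>n. (\<Sum>k \<in> treeT n - treeT 0.
                      real (delta (2*k) \<omega> * delta (2*k+1) \<omega>) * eps (2*k) \<omega> * eps (2*k+1) \<omega>) / pi ^ n)
              \<longlonglongrightarrow> (rhop * sigma2) * (p 0 1 1 * z 0 + p 1 1 1 * z 1) * (pi / (pi - 1)) * W \<omega>)"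
proof -
  interpret bar M zeta delta p pi z X eps a b c d sigma2 tau4 rhop W
    by (intro bar.intro[OF observed_tree.intro[OF prob]] observed_tree_axioms.intro bar_axioms.intro)
      (fact assms)+
  have "AE \<omega> in M.
      (\<lambda>n. (\<Sum>k \<in> {k \<in> treeT n. k mod 2 = i} - treeT 0. (eps k \<omega>)^2 * real (delta (2*k+j) \<omega>)) / pi ^ n)
        \<longlonglongrightarrow> sigma2 * Pmat p i j * (pi / (pi - 1)) * W \<omega> * z i"
    if "i \<in> {0,1}" "j \<in> {0,1}" for i j :: nat
    using that by (intro AE_LIMSEQ_sum_eps_sq) auto
  with AE_LIMSEQ_sum_eps_prod show ?thesis by blast
qed

end
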